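(* Let $g\ge1$, $n\ge1$. The set $\mathcal{SS}(S_{g,n})$ of (conjugacy classes of) simple-stable representations is an open subset of the character variety $\mathcal{X}(S_{g,n})$.
   Context: $\pi_1(S_{g,n})=\langle a_1,b_1,\dots,a_g,b_g,c_1,\dots,c_n\mid\prod[a_i,b_i]\prod c_j\rangle$, free of rank $2g+n-1$. $\mathcal{X}(S_{g,n})$ is the space of non-elementary representations $\pi_1(S_{g,n})\to\mathrm{PSL}(2,\mathbb{R})$ (image fixes no finite subset of $\overline{\mathbb{H}^2}$) modulo conjugation. Fix a free basis and the Cayley graph $\mathcal{C}$ (a tree). For a cyclically reduced word $w=w_1\cdots w_m$, its lift $\widetilde w:\mathbb{R}\to\mathcal{C}$ is the unit-speed bi-infinite path through the identity following $\cdots w_1\cdots w_mw_1\cdots w_m\cdots$. For $z\in\mathbb{H}^2$, $\tau_{\rho,z}:\mathcal{C}\to\mathbb{H}^2$ is the $\rho$-equivariant map sending vertex $v$ to $\rho(v)z$ and edges to geodesic segments. $\rho$ is simple-stable if there exist $C\ge1,\epsilon>0$ such that for every cyclically reduced $w$ representing a non-separating simple closed curve on $S_{g,n}$, $\gamma=\tau_{\rho,z}\circ\widetilde w$ satisfies $\frac1C|t-s|-\epsilon\le d(\gamma(t),\gamma(s))\le C|t-s|+\epsilon$ for all $t,s$. *)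

theory Defs
  imports "HOL-Analysis.Analysis"
begin

type_synonym letter = "nat \<times> bool"   (* (i, True) is the inverse of generator i *)
type_synonym word = "letter list"

definition inv_letter :: "letter \<Rightarrow> letter" where
  "inv_letter x = (fst x, \<not> snd x)"

definition winv :: "word \<Rightarrow> word" where
  "winv w = rev (map inv_letter w)"

fun push :: "letter \<Rightarrow> word \<Rightarrow> word" where
  "push x [] = [x]"
| "push x (y # ys) = (if y = inv_letter x then ys else x # y # ys)"

definition reduce :: "word \<Rightarrow> word" where
  "reduce w = foldr push w []"

definition reduced :: "word \<Rightarrow> bool" where
  "reduced w = (\<forall>k. Suc k < length w \<longrightarrow> w ! Suc k \<noteq> inv_letter (w ! k))"

definition cyc_reduced :: "word \<Rightarrow> bool" where
  "cyc_reduced w = (reduced w \<and> w \<noteq> [] \<and> last w \<noteq> inv_letter (hd w))"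

definition word_over :: "nat \<Rightarrow> word \<Rightarrow> bool" where
  "word_over r w = (\<forall>x\<in>set w. fst x < r)"

definition fconj :: "nat \<Rightarrow> word \<Rightarrow> word \<Rightarrow> bool" where
  "fconj r u v = (\<exists>x. word_over r x \<and> reduce (x @ u @ winv x) = reduce v)"

definition subst :: "(nat \<Rightarrow> word) \<Rightarrow> word \<Rightarrow> word" where
  "subst \<sigma> w = concat (map (\<lambda>x. if snd x then winv (\<sigma> (fst x)) else \<sigma> (fst x)) w)"

definition is_aut :: "nat \<Rightarrow> (nat \<Rightarrow> word) \<Rightarrow> bool" where
  "is_aut r \<sigma> = ((\<forall>i<r. word_over r (\<sigma> i)) \<and>
     (\<exists>\<tau>. (\<forall>i<r. word_over r (\<tau> i)) \<and>
          (\<forall>i<r. reduce (subst \<tau> (\<sigma> i)) = [(i, False)] \<and>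
                 reduce (subst \<sigma> (\<tau> i)) = [(i, False)])))"

section \<open>The surface group of S_{g,n}, n \<ge> 1, as a free group\<close>

text \<open>Free basis: a_i = generator 2i, b_i = generator 2i+1 (i<g),
  c_{j+1} = generator 2g+j (j < n-1); rank 2g+n-1.  The last puncture
  c_n = (prod [a_i,b_i] c_1 ... c_{n-1})^{-1}.\<close>

definition rk :: "nat \<Rightarrow> nat \<Rightarrow> nat" where
  "rk g n = 2 * g + n - 1"

definition comm_word :: "nat \<Rightarrow> word" where
  "comm_word i = [(2*i, False), (2*i+1, False), (2*i, True), (2*i+1, True)]"

text \<open>Peripheral element c_{j+1}, j < n.\<close>
definition periph :: "nat \<Rightarrow> nat \<Rightarrow> nat \<Rightarrow> word" where
  "periph g n j = (if j < n - 1 then [(2*g + j, False)]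
     else winv (concat (map comm_word [0..<g]) @ map (\<lambda>k. (2*g + k, False)) [0..<n-1]))"

text \<open>Automorphisms induced by (possibly orientation reversing) homeomorphisms
  of S_{g,n} (Dehn--Nielsen--Baer): automorphisms permuting the peripheral
  conjugacy classes, all with the same orientation sign.\<close>
definition mcg_aut :: "nat \<Rightarrow> nat \<Rightarrow> (nat \<Rightarrow> word) \<Rightarrow> bool" where
  "mcg_aut g n \<sigma> = (is_aut (rk g n) \<sigma> \<and>
     (\<exists>p e. bij_betw p {..<n} {..<n} \<and>
        (\<forall>j<n. fconj (rk g n) (subst \<sigma> (periph g n j))
                 (if e then winv (periph g n (p j)) else periph g n (p j)))))"

text \<open>w represents (the free homotopy class of) a non-separating simple closed
  curve: its conjugacy class, up to inversion, is in the mapping class group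
  orbit of a_1.\<close>
definition nonsep_scc :: "nat \<Rightarrow> nat \<Rightarrow> word \<Rightarrow> bool" where
  "nonsep_scc g n w = (word_over (rk g n) w \<and>
     (\<exists>\<sigma>. mcg_aut g n \<sigma> \<and> (fconj (rk g n) w (\<sigma> 0) \<or> fconj (rk g n) w (winv (\<sigma> 0)))))"

type_synonym m2 = "real^2^2"

text \<open>A representation is given by SL(2,R) lifts A i of the images of the
  generators i < r; signs are irrelevant (quotiented out below).\<close>
definition letter_mat :: "(nat \<Rightarrow> m2) \<Rightarrow> letter \<Rightarrow> m2" where
  "letter_mat A x = (if snd x then matrix_inv (A (fst x)) else A (fst x))"

definition eval :: "(nat \<Rightarrow> m2) \<Rightarrow> word \<Rightarrow> m2" where
  "eval A w = foldr (\<lambda>x M. letter_mat A x ** M) w (mat 1)"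

definition mob :: "m2 \<Rightarrow> complex \<Rightarrow> complex" where
  "mob M z = (of_real (M$1$1) * z + of_real (M$1$2)) / (of_real (M$2$1) * z + of_real (M$2$2))"

definition hdist :: "complex \<Rightarrow> complex \<Rightarrow> real" where
  "hdist z w = arcosh (1 + (cmod (z - w))\<^sup>2 / (2 * Im z * Im w))"

definition geod_pt :: "complex \<Rightarrow> complex \<Rightarrow> real \<Rightarrow> complex" where
  "geod_pt x y s = (THE p. Im p > 0 \<and> hdist x p = s * hdist x y \<and> hdist p y = (1 - s) * hdist x y)"

text \<open>Closed disc H^2 \<union> boundary: None is the point at infinity.\<close>
definition cl_pts :: "complex option set" where
  "cl_pts = insert None (Some ` {z. Im z \<ge> 0})"

definition mob_ext :: "m2 \<Rightarrow> complex option \<Rightarrow> complex option" where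
  "mob_ext M p = (case p of
      None \<Rightarrow> (if M$2$1 = 0 then None else Some (of_real (M$1$1) / of_real (M$2$1)))
    | Some z \<Rightarrow> (if of_real (M$2$1) * z + of_real (M$2$2) = 0 then None else Some (mob M z)))"

definition nonelementary :: "nat \<Rightarrow> (nat \<Rightarrow> m2) \<Rightarrow> bool" where
  "nonelementary r A = (\<not> (\<exists>F. finite F \<and> F \<noteq> {} \<and> F \<subseteq> cl_pts \<and>
       (\<forall>u. word_over r u \<longrightarrow> mob_ext (eval A u) ` F = F)))"

text \<open>Vertex at integer time k of the lift of w (through the identity at time 0),
  as a (not necessarily reduced) word.\<close>
definition vert :: "word \<Rightarrow> int \<Rightarrow> word" where
  "vert w k = (let m = int (length w); q = k div m; r = nat (k mod m) in
     (if q \<ge> 0 then concat (replicate (nat q) w) else concat (replicate (nat (- q)) (winv w)))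
     @ take r w)"

text \<open>gamma = tau_{rho,z} o (lift of w).\<close>
definition gamma :: "(nat \<Rightarrow> m2) \<Rightarrow> complex \<Rightarrow> word \<Rightarrow> real \<Rightarrow> complex" where
  "gamma A z w t = geod_pt (mob (eval A (vert w \<lfloor>t\<rfloor>)) z)
                           (mob (eval A (vert w (\<lfloor>t\<rfloor> + 1))) z) (t - of_int \<lfloor>t\<rfloor>)"

definition simple_stable :: "nat \<Rightarrow> nat \<Rightarrow> (nat \<Rightarrow> m2) \<Rightarrow> bool" where
  "simple_stable g n A = (\<exists>z. Im z > 0 \<and> (\<exists>C \<epsilon>. C \<ge> 1 \<and> \<epsilon> > 0 \<and>
     (\<forall>w. cyc_reduced w \<and> nonsep_scc g n w \<longrightarrow>
        (\<forall>t s. \<bar>t - s\<bar> / C - \<epsilon> \<le> hdist (gamma A z w t) (gamma A z w s) \<and>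
               hdist (gamma A z w t) (gamma A z w s) \<le> C * \<bar>t - s\<bar> + \<epsilon>))))"

definition rep_top :: "nat \<Rightarrow> (nat \<Rightarrow> m2) topology" where
  "rep_top r = subtopology (product_topology (\<lambda>i. euclidean) {..<r})
                           {A. \<forall>i<r. det (A i) = 1}"

definition NE :: "nat \<Rightarrow> (nat \<Rightarrow> m2) set" where
  "NE r = {A \<in> topspace (rep_top r). nonelementary r A}"

text \<open>Conjugation in PSL(2,R) (lifted to SL(2,R) with sign ambiguity).\<close>
definition conj_rel :: "nat \<Rightarrow> ((nat \<Rightarrow> m2) \<times> (nat \<Rightarrow> m2)) set" where
  "conj_rel r = {(A, B). A \<in> NE r \<and> B \<in> NE r \<and>
     (\<exists>G \<epsilon>. det G = 1 \<and> (\<forall>i<r. (\<epsilon> i = 1 \<or> \<epsilon> i = (-1::real)) \<and>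
                B i = \<epsilon> i *\<^sub>R (G ** A i ** matrix_inv G)))}"

definition Xspace :: "nat \<Rightarrow> nat \<Rightarrow> (nat \<Rightarrow> m2) set set" where
  "Xspace g n = NE (rk g n) // conj_rel (rk g n)"

definition Xtop :: "nat \<Rightarrow> nat \<Rightarrow> (nat \<Rightarrow> m2) set topology" where
  "Xtop g n = topology (\<lambda>U. U \<subseteq> Xspace g n \<and>
        openin (subtopology (rep_top (rk g n)) (NE (rk g n))) (\<Union>U))"

definition SS :: "nat \<Rightarrow> nat \<Rightarrow> (nat \<Rightarrow> m2) set set" where
  "SS g n = {conj_rel (rk g n) `` {A} | A. A \<in> NE (rk g n) \<and> simple_stable g n A}"

end

theory Submission
  imports Defs
begin

(* A representation is simple-stable iff, for some basepoint z, the orbit paths of all words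
   representing non-separating simple closed curves are uniform quasi-geodesics in H^2.
   The hyperbolic plane is Gromov hyperbolic (with delta = ln 48 / 2, computed in the hyperboloid
   and Klein models), so a quantitative Morse lemma bounds Gromov products along a quasi-geodesic
   segment logarithmically in its length. This gives a local-to-global principle: a path whose
   subpaths of length 2L are uniformly close to those of a (C, eps)-quasi-geodesic is itself a
   quasi-geodesic, once L is large in terms of C, eps and the displacements of the generators.
   That condition only involves the finitely many words of length at most 2L, whose displacements
   depend continuously on the representation, so it persists on a neighbourhood. Simple-stability
   is invariant under conjugation (which only moves the basepoint), hence the set of simple-stable
   classes is open in the quotient topology. *)

section \<open>Moebius transformations and the hyperbolic metric\<close>

lemma m2_eq_iff: "(M::m2) = N \<longleftrightarrow> M$1$1 = N$1$1 \<and> M$1$2 = N$1$2 \<and> M$2$1 = N$2$1 \<and> M$2$2 = N$2$2"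
  by (auto simp: vec_eq_iff forall_2)

lemma m2_mult_nth [simp]: "((M::m2) ** N)$i$j = M$i$1 * N$1$j + M$i$2 * N$2$j"
  by (simp add: matrix_matrix_mult_def sum_2)

lemma m2_mat_1_nth [simp]:
  "(mat 1 :: m2)$1$1 = 1" "(mat 1 :: m2)$1$2 = 0" "(mat 1 :: m2)$2$1 = 0" "(mat 1 :: m2)$2$2 = 1"
  by (simp_all add: mat_def)

definition adj2 :: "m2 \<Rightarrow> m2" where
  "adj2 M = vector [vector [M$2$2, - M$1$2], vector [- M$2$1, M$1$1]]"

lemma adj2_nth [simp]:
  "adj2 M $1$1 = M$2$2" "adj2 M $1$2 = - M$1$2" "adj2 M $2$1 = - M$2$1" "adj2 M $2$2 = M$1$1"
  by (simp_all add: adj2_def)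

lemma mult_adj2_right: "det M = 1 \<Longrightarrow> M ** adj2 M = mat 1"
  and mult_adj2_left: "det M = 1 \<Longrightarrow> adj2 M ** M = mat 1"
  by (auto simp: m2_eq_iff det_2 algebra_simps)

lemma mult_adj2_cancel:
  assumes "det M = 1"
  shows "X ** M ** adj2 M = X" "X ** adj2 M ** M = X"
  using assms by (simp_all add: mult_adj2_left mult_adj2_right flip: matrix_mul_assoc)

lemma det_adj2 [simp]: "det (adj2 M) = det M"
  by (simp add: det_2 algebra_simps)

lemma adj2_adj2 [simp]: "adj2 (adj2 M) = M"
  by (simp add: m2_eq_iff)

lemma adj2_mat_1 [simp]: "adj2 (mat 1) = mat 1"
  by (simp add: m2_eq_iff)

lemma adj2_mult: "adj2 (M ** N) = adj2 N ** adj2 M"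
  by (simp add: m2_eq_iff algebra_simps)

lemma adj2_scaleR: "adj2 (c *\<^sub>R M) = c *\<^sub>R adj2 M"
  by (simp add: m2_eq_iff)

lemma det_scaleR_m2: "det (c *\<^sub>R (M::m2)) = c\<^sup>2 * det M"
  by (simp add: det_2 power2_eq_square algebra_simps)

lemma matrix_inv_eqI:
  fixes A B :: "'a::semiring_1^'n^'n"
  assumes "A ** B = mat 1" "B ** A = mat 1"
  shows "matrix_inv A = B"
proof -
  have "A ** matrix_inv A = mat 1 \<and> matrix_inv A ** A = mat 1"
    unfolding matrix_inv_def by (rule someI[of _ B]) (use assms in blast)
  then have "matrix_inv A = matrix_inv A ** (A ** B)"
    using assms by simp
  also have "\<dots> = B"
    by (simp add: matrix_mul_assoc \<open>A ** matrix_inv A = mat 1 \<and> matrix_inv A ** A = mat 1\<close>)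
  finally show ?thesis .
qed

lemma matrix_inv_eq_adj2: "det M = 1 \<Longrightarrow> matrix_inv M = adj2 M"
  by (rule matrix_inv_eqI) (auto simp: mult_adj2_right mult_adj2_left)

definition mob_denom :: "m2 \<Rightarrow> complex \<Rightarrow> complex" where
  "mob_denom M z = of_real (M$2$1) * z + of_real (M$2$2)"

lemma mob_denom_nonzero:
  assumes "det M = 1" "Im z > 0"
  shows "mob_denom M z \<noteq> 0"
proof
  assume "mob_denom M z = 0"
  then have "M$2$1 * Im z = 0" "M$2$1 * Re z + M$2$2 = 0"
    by (simp_all add: mob_denom_def complex_eq_iff)
  then have "M$2$1 = 0" "M$2$2 = 0"
    using assms(2) by auto
  then show False
    using assms(1) by (simp add: det_2)
qed

lemma mob_eq_div_denom: "mob M z = (of_real (M$1$1) * z + of_real (M$1$2)) / mob_denom M z"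
  by (simp add: mob_def mob_denom_def)

lemma Im_mob:
  assumes "det M = 1"
  shows "Im (mob M z) = Im z / (cmod (mob_denom M z))\<^sup>2"
proof -
  have "M$1$1 * Im z * (M$2$1 * Re z + M$2$2) - (M$1$1 * Re z + M$1$2) * (M$2$1 * Im z)
      = det M * Im z"
    by (simp add: det_2 algebra_simps)
  then show ?thesis
    using assms by (simp add: mob_eq_div_denom mob_denom_def Im_divide cmod_power2)
qed

lemma Im_mob_pos: "det M = 1 \<Longrightarrow> Im z > 0 \<Longrightarrow> Im (mob M z) > 0"
  using mob_denom_nonzero[of M z] by (simp add: Im_mob)

lemma mob_diff:
  assumes "det M = 1" "Im z > 0" "Im w > 0"
  shows "mob M z - mob M w = (z - w) / (mob_denom M z * mob_denom M w)"
proof -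
  have nz: "mob_denom M z \<noteq> 0" "mob_denom M w \<noteq> 0"
    using mob_denom_nonzero assms by auto
  have "(of_real (M$1$1) * z + of_real (M$1$2)) * mob_denom M w
        - (of_real (M$1$1) * w + of_real (M$1$2)) * mob_denom M z = of_real (det M) * (z - w)"
    by (simp add: mob_denom_def det_2 algebra_simps)
  then show ?thesis
    using nz assms(1) by (simp add: mob_eq_div_denom field_simps)
qed

lemma mob_mult:
  assumes "det N = 1" "Im z > 0"
  shows "mob (M ** N) z = mob M (mob N z)"
proof -
  define u where "u = of_real (N$1$1) * z + of_real (N$1$2)"
  define v where "v = mob_denom N z"
  have v: "v \<noteq> 0"
    using mob_denom_nonzero assms by (simp add: v_def)
  have "of_real a * (u / v) + of_real b = (of_real a * u + of_real b * v) / v" for a b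
    using v by (simp add: field_simps)
  then have "mob M (u / v) = (of_real (M$1$1) * u + of_real (M$1$2) * v) / (of_real (M$2$1) * u + of_real (M$2$2) * v)"
    using v by (simp add: mob_def)
  also have "\<dots> = mob (M ** N) z"
    by (simp add: mob_def u_def v_def mob_denom_def algebra_simps)
  finally show ?thesis
    by (simp add: mob_eq_div_denom u_def v_def)
qed

lemma mob_mat_1 [simp]: "mob (mat 1) z = z"
  by (simp add: mob_def)

lemma mob_adj2_mob: "det M = 1 \<Longrightarrow> Im z > 0 \<Longrightarrow> mob (adj2 M) (mob M z) = z"
  by (metis mult_adj2_left mob_mat_1 mob_mult)

lemma mob_mob_adj2: "det M = 1 \<Longrightarrow> Im z > 0 \<Longrightarrow> mob M (mob (adj2 M) z) = z"
  by (metis mult_adj2_right det_adj2 mob_mat_1 mob_mult)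

lemma mob_scaleR: "c \<noteq> 0 \<Longrightarrow> mob (c *\<^sub>R M) z = mob M z"
proof -
  assume c: "c \<noteq> 0"
  have "mob (c *\<^sub>R M) z = (of_real c * (of_real (M$1$1) * z + of_real (M$1$2)))
                        / (of_real c * (of_real (M$2$1) * z + of_real (M$2$2)))"
    by (simp add: mob_def algebra_simps)
  then show ?thesis
    using c by (simp add: mob_def)
qed

definition move_to_i :: "complex \<Rightarrow> m2" where
  "move_to_i y = vector [vector [1 / sqrt (Im y), - Re y / sqrt (Im y)], vector [0, sqrt (Im y)]]"

lemma det_move_to_i: "Im y > 0 \<Longrightarrow> det (move_to_i y) = 1"
  by (simp add: move_to_i_def det_2)

lemma mob_move_to_i: 
  assumes "Im y > 0" 
  shows "mob (move_to_i y) y = \<i>"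
proof -
  have "mob (move_to_i y) y = (y - of_real (Re y)) / (of_real (sqrt (Im y)) * of_real (sqrt (Im y)))"
    using assms by (simp add: mob_def move_to_i_def field_simps)
  also have "\<dots> = (\<i> * of_real (Im y)) / of_real (Im y)"
    using assms by (simp add: complex_eq_iff flip: of_real_mult)
  finally show ?thesis
    using assms by simp
qed

lemma hdist_commute: "hdist z w = hdist w z"
  by (simp add: hdist_def norm_minus_commute mult.commute mult.left_commute)

lemma hdist_self [simp]: "hdist z z = 0"
  by (simp add: hdist_def)

lemma hdist_nonneg: "Im z > 0 \<Longrightarrow> Im w > 0 \<Longrightarrow> hdist z w \<ge> 0"
  by (simp add: hdist_def)

lemma cosh_hdist: "Im z > 0 \<Longrightarrow> Im w > 0 \<Longrightarrow> cosh (hdist z w) = 1 + (cmod (z - w))\<^sup>2 / (2 * Im z * Im w)"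
  unfolding hdist_def by (rule cosh_arcosh_real) simp

lemma hdist_eq_0_iff: "Im z > 0 \<Longrightarrow> Im w > 0 \<Longrightarrow> hdist z w = 0 \<longleftrightarrow> z = w"
  unfolding hdist_def by (subst arcosh_eq_0_iff_real) auto

lemma hdist_eq_if_cosh_eq:
  "Im p > 0 \<Longrightarrow> Im q > 0 \<Longrightarrow> a \<ge> 0 \<Longrightarrow> cosh (hdist p q) = cosh a \<Longrightarrow> hdist p q = a"
  using hdist_nonneg[of p q] cosh_real_eq_iff by (metis abs_of_nonneg)

lemma hdist_mob:
  assumes "det M = 1" "Im z > 0" "Im w > 0"
  shows "hdist (mob M z) (mob M w) = hdist z w"
proof -
  have "mob_denom M z \<noteq> 0" "mob_denom M w \<noteq> 0"
    using mob_denom_nonzero assms by auto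
  then show ?thesis
    using assms by (simp add: hdist_def mob_diff Im_mob norm_divide norm_mult power_divide
                              power_mult_distrib field_simps)
qed

text \<open>\<open>(hyp0 z, hypv z)\<close> is the image of \<open>z\<close> on the hyperboloid \<open>t\<^sup>2 - |v|\<^sup>2 = 1\<close> in Minkowski
  space \<open>\<real> \<times> \<complex>\<close>; there \<open>cosh\<close> of the distance is the Lorentzian product \<open>t t' - \<langle>v, v'\<rangle>\<close>.\<close>

definition hyp0 :: "complex \<Rightarrow> real" where
  "hyp0 z = (1 + (Re z)\<^sup>2 + (Im z)\<^sup>2) / (2 * Im z)"

definition hypv :: "complex \<Rightarrow> complex" where
  "hypv z = Complex (Re z / Im z) (((Re z)\<^sup>2 + (Im z)\<^sup>2 - 1) / (2 * Im z))"

lemma cosh_hdist_hyperboloid: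
  assumes "Im z > 0" "Im w > 0"
  shows "cosh (hdist z w) = hyp0 z * hyp0 w - inner (hypv z) (hypv w)"
proof -
  have "1 + ((a - c)\<^sup>2 + (b - d)\<^sup>2) / (2 * b * d)
      = (1 + a\<^sup>2 + b\<^sup>2) / (2 * b) * ((1 + c\<^sup>2 + d\<^sup>2) / (2 * d)) - (a / b * (c / d)
        + (a\<^sup>2 + b\<^sup>2 - 1) / (2 * b) * ((c\<^sup>2 + d\<^sup>2 - 1) / (2 * d)))"
    if "b > 0" "d > 0" for a b c d :: real
    using that by (simp add: field_simps) (simp add: algebra_simps power2_eq_square)
  then show ?thesis
    using assms by (simp add: cosh_hdist cmod_power2 hyp0_def hypv_def inner_complex_def)
qed

lemma hyp0_squared: "Im z > 0 \<Longrightarrow> (hyp0 z)\<^sup>2 = 1 + (norm (hypv z))\<^sup>2"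
  by (simp add: hyp0_def hypv_def cmod_power2) (simp add: field_simps power2_eq_square)

lemma hyp0_pos: "Im z > 0 \<Longrightarrow> hyp0 z > 0"
  by (simp add: hyp0_def add_pos_nonneg)

lemma hyp0_i [simp]: "hyp0 \<i> = 1" and hypv_i [simp]: "hypv \<i> = 0"
  by (simp_all add: hyp0_def hypv_def complex_eq_iff)

lemma hyperboloid_coords_inj:
  assumes "Im p > 0" "Im q > 0" "hyp0 p = hyp0 q" "hypv p = hypv q"
  shows "p = q"
proof -
  have "hyp0 z - Im (hypv z) = 1 / Im z" "Re (hypv z) * Im z = Re z" if "Im z > 0" for z
    using that by (simp_all add: hyp0_def hypv_def field_simps)
  then show ?thesis
    using assms by (metis complex_eq_iff divide_cancel_left one_neq_zero)
qed

lemma hyperboloid_point_exists: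
  assumes "T > 0" "T\<^sup>2 = 1 + (norm Q)\<^sup>2"
  shows "\<exists>p. Im p > 0 \<and> hyp0 p = T \<and> hypv p = Q"
proof -
  define k where "k = T - Im Q"
  have "(Im Q)\<^sup>2 < T\<^sup>2"
    using assms(2) by (simp add: cmod_power2 add_pos_nonneg)
  then have k: "k > 0"
    using assms(1) by (simp add: k_def) (smt (verit) power2_less_imp_less abs_le_square_iff)
  have e: "k\<^sup>2 + (Re Q)\<^sup>2 + 1 = 2 * T * k" "(Re Q)\<^sup>2 + 1 - k\<^sup>2 = 2 * Im Q * k"
    using assms(2) unfolding cmod_power2 k_def by (simp_all add: power2_eq_square algebra_simps)
  define p where "p = Complex (Re Q / k) (1 / k)"
  have coords: "hyp0 p = (1 + (Re Q / k)\<^sup>2 + (1 / k)\<^sup>2) / (2 * (1 / k))"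
    "Im (hypv p) = ((Re Q / k)\<^sup>2 + (1 / k)\<^sup>2 - 1) / (2 * (1 / k))"
    by (simp_all add: p_def hyp0_def hypv_def)
  have "(1 + (Re Q / k)\<^sup>2 + (1 / k)\<^sup>2) / (2 * (1 / k)) = (k\<^sup>2 + (Re Q)\<^sup>2 + 1) / (2 * k)"
    "((Re Q / k)\<^sup>2 + (1 / k)\<^sup>2 - 1) / (2 * (1 / k)) = ((Re Q)\<^sup>2 + 1 - k\<^sup>2) / (2 * k)"
    using k by (simp_all add: field_simps power2_eq_square)
  then have "hyp0 p = T" "hypv p = Q"
    using k coords by (simp_all add: e complex_eq_iff p_def hypv_def)
  moreover have "Im p > 0"
    using k by (simp add: p_def)
  ultimately show ?thesis
    by blast
qed

lemma cosh_hdist_i: "Im w > 0 \<Longrightarrow> cosh (hdist \<i> w) = hyp0 w"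
  using cosh_hdist_hyperboloid[of \<i> w] by simp

lemma sinh_hdist_i: 
  assumes "Im w > 0" 
  shows "sinh (hdist \<i> w) = norm (hypv w)"
proof -
  have "(sinh (hdist \<i> w))\<^sup>2 = (norm (hypv w))\<^sup>2"
    using cosh_square_eq[of "hdist \<i> w"] cosh_hdist_i[OF assms] hyp0_squared[OF assms] by simp
  moreover have "sinh (hdist \<i> w) \<ge> 0"
    using hdist_nonneg[of \<i> w] assms by simp
  ultimately show ?thesis
    by (simp add: power2_eq_iff_nonneg)
qed

lemma hdist_triangle_i:
  assumes "Im x > 0" "Im z > 0"
  shows "hdist x z \<le> hdist \<i> x + hdist \<i> z"
proof -
  have "cosh (hdist x z) \<le> hyp0 x * hyp0 z + norm (hypv x) * norm (hypv z)"
    using cosh_hdist_hyperboloid[OF assms] Cauchy_Schwarz_ineq2[of "hypv x" "hypv z"] by linarith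
  also have "\<dots> = cosh (hdist \<i> x + hdist \<i> z)"
    by (simp add: cosh_add cosh_hdist_i sinh_hdist_i assms)
  finally show ?thesis
    using hdist_nonneg assms by (simp add: cosh_real_nonneg_le_iff)
qed

lemma hdist_triangle:
  assumes "Im x > 0" "Im y > 0" "Im z > 0"
  shows "hdist x z \<le> hdist x y + hdist y z"
proof -
  let ?M = "move_to_i y"
  have M: "det ?M = 1"
    using det_move_to_i assms by simp
  have "hdist x z = hdist (mob ?M x) (mob ?M z)"
    using hdist_mob[OF M] assms by simp
  also have "\<dots> \<le> hdist \<i> (mob ?M x) + hdist \<i> (mob ?M z)"
    using Im_mob_pos[OF M] assms by (intro hdist_triangle_i) auto
  also have "\<dots> = hdist y x + hdist y z"
    using hdist_mob[OF M] mob_move_to_i assms by metis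
  finally show ?thesis
    by (simp add: hdist_commute)
qed

lemma geodesic_point_i_iff:
  assumes y: "Im y > 0" "hdist \<i> y > 0" and s: "0 \<le> s" "s \<le> 1" and u: "Im u > 0"
  defines "D \<equiv> hdist \<i> y"
  shows "hdist \<i> u = s * D \<and> hdist u y = (1 - s) * D \<longleftrightarrow>
         hyp0 u = cosh (s * D) \<and> hypv u = (sinh (s * D) / sinh D) *\<^sub>R hypv y"
    (is "?dist \<longleftrightarrow> ?coords")
proof -
  define l where "l = sinh (s * D) / sinh D"
  have D: "D > 0" "sinh D > 0"
    using y by (simp_all add: D_def)
  have hyp_y: "hyp0 y = cosh D" "norm (hypv y) = sinh D"
    using cosh_hdist_i[OF y(1)] sinh_hdist_i[OF y(1)] by (simp_all add: D_def)
  have cosh_uy: "cosh (hdist u y) = hyp0 u * cosh D - inner (hypv u) (hypv y)"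
    using cosh_hdist_hyperboloid[OF u y(1)] hyp_y by simp
  have cosh_rest: "cosh ((1 - s) * D) = cosh (s * D) * cosh D - sinh (s * D) * sinh D"
    using cosh_diff[of D "s * D"] by (simp add: algebra_simps)
  show ?thesis
  proof
    assume ?dist
    then have hyp_u: "hyp0 u = cosh (s * D)" "norm (hypv u) = sinh (s * D)"
      using cosh_hdist_i[OF u] sinh_hdist_i[OF u] by auto
    have "inner (hypv u) (hypv y) = sinh D * sinh (s * D)"
      using cosh_uy cosh_rest \<open>?dist\<close> hyp_u by (simp add: ac_simps)
    moreover have "(norm (hypv u - l *\<^sub>R hypv y))\<^sup>2
        = (norm (hypv u))\<^sup>2 - 2 * l * inner (hypv u) (hypv y) + l\<^sup>2 * (norm (hypv y))\<^sup>2"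
      unfolding power2_norm_eq_inner by (simp add: inner_diff inner_commute algebra_simps power2_eq_square)
    ultimately have "(norm (hypv u - l *\<^sub>R hypv y))\<^sup>2 = 0"
      using hyp_u hyp_y D by (simp add: l_def power2_eq_square field_simps)
    then show ?coords
      using hyp_u by (simp add: l_def)
  next
    assume ?coords
    have "hdist \<i> u = s * D"
      using \<open>?coords\<close> cosh_hdist_i[OF u] u s D by (intro hdist_eq_if_cosh_eq) auto
    moreover have "cosh (hdist u y) = cosh ((1 - s) * D)"
      using \<open>?coords\<close> cosh_uy cosh_rest hyp_y D
      by (simp add: power2_norm_eq_inner[symmetric] power2_eq_square)
    then have "hdist u y = (1 - s) * D"
      using u y s D by (intro hdist_eq_if_cosh_eq) auto
    ultimately show ?dist ..
  qed
qed

lemma geodesic_point_i_ex1: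
  assumes y: "Im y > 0" and s: "0 \<le> s" "s \<le> 1"
  shows "\<exists>!p. Im p > 0 \<and> hdist \<i> p = s * hdist \<i> y \<and> hdist p y = (1 - s) * hdist \<i> y"
proof (cases "hdist \<i> y = 0")
  case True
  then show ?thesis
    using y hdist_eq_0_iff[of \<i>] by (intro ex1I[of _ \<i>]) auto
next
  case False
  define D where "D = hdist \<i> y"
  have D: "D > 0"
    using False hdist_nonneg[of \<i> y] y by (simp add: D_def)
  define Q where "Q = (sinh (s * D) / sinh D) *\<^sub>R hypv y"
  have "norm Q = \<bar>sinh (s * D) / sinh D\<bar> * sinh D"
    unfolding Q_def norm_scaleR using sinh_hdist_i[OF y] by (simp add: D_def)
  also have "\<dots> = sinh (s * D)"
    using D s by simp
  finally have "(cosh (s * D))\<^sup>2 = 1 + (norm Q)\<^sup>2"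
    using cosh_square_eq[of "s * D"] by simp
  then obtain p where p: "Im p > 0" "hyp0 p = cosh (s * D)" "hypv p = Q"
    using hyperboloid_point_exists[of "cosh (s * D)" Q] by auto
  note char = geodesic_point_i_iff[OF y _ s, folded D_def]
  show ?thesis
  proof (rule ex1I[of _ p])
    show "Im p > 0 \<and> hdist \<i> p = s * hdist \<i> y \<and> hdist p y = (1 - s) * hdist \<i> y"
      using char[OF _ p(1)] p D by (simp add: Q_def D_def)
  next
    fix q assume "Im q > 0 \<and> hdist \<i> q = s * hdist \<i> y \<and> hdist q y = (1 - s) * hdist \<i> y"
    then show "q = p"
      using char[of q] p D by (auto simp: Q_def D_def intro: hyperboloid_coords_inj)
  qed
qed

lemma geodesic_point_ex1:
  assumes x: "Im x > 0" and y: "Im y > 0" and s: "0 \<le> s" "s \<le> 1"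
  shows "\<exists>!p. Im p > 0 \<and> hdist x p = s * hdist x y \<and> hdist p y = (1 - s) * hdist x y"
proof -
  let ?M = "move_to_i x"
  have M: "det ?M = 1" "det (adj2 ?M) = 1"
    using det_move_to_i x by simp_all
  have transfer: "hdist x u = hdist \<i> (mob ?M u) \<and> hdist u y = hdist (mob ?M u) (mob ?M y)"
    if "Im u > 0" for u
    using hdist_mob[OF M(1) x that] hdist_mob[OF M(1) that y] mob_move_to_i[OF x] by simp
  have My: "Im (mob ?M y) > 0"
    using Im_mob_pos M y by simp
  have hxy: "hdist x y = hdist \<i> (mob ?M y)"
    using transfer[OF y] by simp
  obtain p0 where p0: "Im p0 > 0" "hdist \<i> p0 = s * hdist x y" "hdist p0 (mob ?M y) = (1 - s) * hdist x y"
    and uniq: "\<And>q. Im q > 0 \<Longrightarrow> hdist \<i> q = s * hdist x y \<Longrightarrow> hdist q (mob ?M y) = (1 - s) * hdist x y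
                 \<Longrightarrow> q = p0"
    using geodesic_point_i_ex1[OF My s] unfolding hxy by blast
  show ?thesis
  proof (rule ex1I[of _ "mob (adj2 ?M) p0"])
    show "Im (mob (adj2 ?M) p0) > 0 \<and> hdist x (mob (adj2 ?M) p0) = s * hdist x y
          \<and> hdist (mob (adj2 ?M) p0) y = (1 - s) * hdist x y"
      using transfer[of "mob (adj2 ?M) p0"] Im_mob_pos[OF M(2) p0(1)] mob_mob_adj2[OF M(1) p0(1)] p0
      by simp
  next
    fix q assume q: "Im q > 0 \<and> hdist x q = s * hdist x y \<and> hdist q y = (1 - s) * hdist x y"
    then have "mob ?M q = p0"
      using transfer[of q] Im_mob_pos[OF M(1)] by (intro uniq) auto
    then show "q = mob (adj2 ?M) p0"
      using mob_adj2_mob[OF M(1)] q by metis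
  qed
qed

lemma geod_pt_spec:
  assumes "Im x > 0" "Im y > 0" "0 \<le> s" "s \<le> 1"
  shows "Im (geod_pt x y s) > 0" "hdist x (geod_pt x y s) = s * hdist x y"
    "hdist (geod_pt x y s) y = (1 - s) * hdist x y"
  using theI'[OF geodesic_point_ex1[OF assms]] unfolding geod_pt_def by blast+

lemma geod_pt_0: "Im x > 0 \<Longrightarrow> Im y > 0 \<Longrightarrow> geod_pt x y 0 = x"
  using geod_pt_spec[of x y 0] hdist_eq_0_iff[of x "geod_pt x y 0"] by simp

lemma geod_pt_mob:
  assumes G: "det G = 1" and x: "Im x > 0" and y: "Im y > 0" and s: "0 \<le> s" "s \<le> 1"
  shows "geod_pt (mob G x) (mob G y) s = mob G (geod_pt x y s)"
  unfolding geod_pt_def[of "mob G x"]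
proof (rule the1_equality[OF geodesic_point_ex1])
  show "Im (mob G (geod_pt x y s)) > 0 \<and> hdist (mob G x) (mob G (geod_pt x y s)) = s * hdist (mob G x) (mob G y)
        \<and> hdist (mob G (geod_pt x y s)) (mob G y) = (1 - s) * hdist (mob G x) (mob G y)"
    using Im_mob_pos[OF G] hdist_mob[OF G] geod_pt_spec[OF x y s] x y by simp
qed (use Im_mob_pos[OF G] x y s in auto)

section \<open>Gromov products and hyperbolicity\<close>

definition gromov :: "complex \<Rightarrow> complex \<Rightarrow> complex \<Rightarrow> real" where
  "gromov p x y = (hdist p x + hdist p y - hdist x y) / 2"

lemma gromov_mob:
  assumes "det G = 1" "Im p > 0" "Im x > 0" "Im y > 0"
  shows "gromov (mob G p) (mob G x) (mob G y) = gromov p x y"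
  using hdist_mob[OF assms(1)] assms by (simp add: gromov_def)

lemma gromov_commute: "gromov p x y = gromov p y x"
  by (simp add: gromov_def hdist_commute add.commute)

lemma gromov_le_hdist: "Im p > 0 \<Longrightarrow> Im x > 0 \<Longrightarrow> Im y > 0 \<Longrightarrow> gromov p x y \<le> hdist p x"
  using hdist_triangle[of p x y] by (simp add: gromov_def)

lemma hdist_diff_le_gromov:
  "Im p > 0 \<Longrightarrow> Im x > 0 \<Longrightarrow> Im y > 0 \<Longrightarrow> hdist p x - hdist x y \<le> gromov p x y"
  using hdist_triangle[of p y x] by (simp add: gromov_def hdist_commute)

lemma gromov_swap: "gromov q p x + gromov p q x = hdist p q"
  by (simp add: gromov_def hdist_commute field_simps)

lemma hdist_eq_gromov: "hdist x y = hdist p x + hdist p y - 2 * gromov p x y"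
  by (simp add: gromov_def field_simps)

lemma exp_neg_two_gromov: "exp (-2 * gromov p u v) = exp (hdist u v) / (exp (hdist p u) * exp (hdist p v))"
proof -
  have "-2 * gromov p u v = hdist u v - (hdist p u + hdist p v)"
    by (simp add: gromov_def)
  then show ?thesis
    by (simp add: exp_diff exp_add)
qed

lemma exp_le_two_cosh: "exp u \<le> 2 * cosh (u::real)"
  using cosh_plus_sinh[of u] sinh_le_cosh_real[of u] by linarith

lemma cosh_le_exp: "(u::real) \<ge> 0 \<Longrightarrow> cosh u \<le> exp u"
  using cosh_plus_sinh[of u] sinh_real_nonneg_iff[of u] by linarith

text \<open>The Beltrami--Klein model: the hyperboloid point projected radially onto the unit disc.\<close>

definition klein :: "complex \<Rightarrow> complex" where
  "klein z = hypv z /\<^sub>R hyp0 z"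

lemma norm_klein_le_1:
  assumes "Im z > 0"
  shows "norm (klein z) \<le> 1"
proof -
  have "(norm (klein z))\<^sup>2 = ((hyp0 z)\<^sup>2 - 1) / (hyp0 z)\<^sup>2"
    using hyp0_squared[OF assms] hyp0_pos[OF assms]
    by (simp add: klein_def power_mult_distrib power2_abs field_simps)
  also have "\<dots> \<le> 1"
    using hyp0_pos[OF assms] by (simp add: divide_le_eq_1)
  finally show ?thesis
    by (simp add: power_le_one_iff)
qed

lemma cosh_hdist_div_cosh_hdist_i:
  assumes "Im u > 0" "Im v > 0"
  shows "cosh (hdist u v) / (cosh (hdist \<i> u) * cosh (hdist \<i> v)) = 1 - inner (klein u) (klein v)"
  using hyp0_pos[OF assms(1)] hyp0_pos[OF assms(2)]
  by (simp add: cosh_hdist_i assms cosh_hdist_hyperboloid klein_def field_simps)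

lemma inner_defect_triangle:
  fixes a b c :: "'a::real_inner"
  assumes "norm a \<le> 1" "norm b \<le> 1" "norm c \<le> 1"
  shows "1 - inner a b \<le> 3 * ((1 - inner a c) + (1 - inner c b))"
proof -
  have "6 * (1 - inner a c) + 6 * (1 - inner c b) - 2 * (1 - inner a b)
      = (norm (a - c))\<^sup>2 + (norm (c - b))\<^sup>2 + (norm (a - 2 *\<^sub>R c + b))\<^sup>2
        + 2 * (1 - (norm a)\<^sup>2) + 2 * (1 - (norm b)\<^sup>2) + 6 * (1 - (norm c)\<^sup>2)"
    by (simp add: power2_norm_eq_inner inner_diff inner_add inner_commute algebra_simps)
  moreover have "(norm a)\<^sup>2 \<le> 1" "(norm b)\<^sup>2 \<le> 1" "(norm c)\<^sup>2 \<le> 1"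
    using assms by (simp_all add: power_le_one)
  ultimately show ?thesis
    by (smt (verit) zero_le_power2)
qed

lemma exp_gromov_i_le:
  assumes "Im u > 0" "Im v > 0"
  shows "exp (-2 * gromov \<i> u v) \<le> 2 * (1 - inner (klein u) (klein v))"
proof -
  have "exp (-2 * gromov \<i> u v) = exp (hdist u v) / (exp (hdist \<i> u) * exp (hdist \<i> v))"
    by (rule exp_neg_two_gromov)
  also have "\<dots> \<le> 2 * cosh (hdist u v) / (cosh (hdist \<i> u) * cosh (hdist \<i> v))"
    by (intro frac_le mult_mono exp_le_two_cosh cosh_le_exp hdist_nonneg) (use assms in auto)
  also have "\<dots> = 2 * (1 - inner (klein u) (klein v))"
    using cosh_hdist_div_cosh_hdist_i[OF assms] by simp
  finally show ?thesis .
qed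

lemma klein_defect_le_exp_gromov_i:
  assumes "Im u > 0" "Im v > 0"
  shows "1 - inner (klein u) (klein v) \<le> 4 * exp (-2 * gromov \<i> u v)"
proof -
  have "1 - inner (klein u) (klein v) = cosh (hdist u v) / (cosh (hdist \<i> u) * cosh (hdist \<i> v))"
    using cosh_hdist_div_cosh_hdist_i[OF assms] by simp
  also have "\<dots> \<le> exp (hdist u v) / ((exp (hdist \<i> u) / 2) * (exp (hdist \<i> v) / 2))"
    using exp_le_two_cosh[of "hdist \<i> u"] exp_le_two_cosh[of "hdist \<i> v"]
    by (intro frac_le mult_mono cosh_le_exp hdist_nonneg) (use assms in auto)
  also have "\<dots> = 4 * exp (-2 * gromov \<i> u v)"
    by (simp only: exp_neg_two_gromov) (simp add: field_simps)
  finally show ?thesis .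
qed

text \<open>The constant comes from chaining the three estimates above: \<open>48 = 2 \<cdot> 6 \<cdot> 4\<close>.\<close>

definition hyp_delta :: real where
  "hyp_delta = ln 48 / 2"

lemma hyp_delta_nonneg: "hyp_delta \<ge> 0"
  by (simp add: hyp_delta_def)

lemma gromov_four_point_i:
  assumes x: "Im x > 0" and y: "Im y > 0" and z: "Im z > 0"
  shows "min (gromov \<i> x z) (gromov \<i> z y) - hyp_delta \<le> gromov \<i> x y"
proof -
  let ?m = "min (gromov \<i> x z) (gromov \<i> z y)"
  have "exp (-2 * gromov \<i> x y) \<le> 2 * (1 - inner (klein x) (klein y))"
    by (rule exp_gromov_i_le[OF x y])
  also have "\<dots> \<le> 6 * ((1 - inner (klein x) (klein z)) + (1 - inner (klein z) (klein y)))"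
    using inner_defect_triangle[OF norm_klein_le_1[OF x] norm_klein_le_1[OF y] norm_klein_le_1[OF z]]
    by simp
  also have "\<dots> \<le> 24 * (exp (-2 * gromov \<i> x z) + exp (-2 * gromov \<i> z y))"
    using klein_defect_le_exp_gromov_i[OF x z] klein_defect_le_exp_gromov_i[OF z y] by simp
  also have "\<dots> \<le> 48 * exp (-2 * ?m)"
  proof -
    have "exp (-2 * gromov \<i> x z) \<le> exp (-2 * ?m)" "exp (-2 * gromov \<i> z y) \<le> exp (-2 * ?m)"
      by simp_all
    then show ?thesis
      unfolding distrib_left by linarith
  qed
  also have "\<dots> = exp (ln 48 - 2 * ?m)"
    by (simp add: exp_diff exp_minus field_simps)
  finally show ?thesis
    by (simp add: hyp_delta_def)
qed

lemma gromov_four_point: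
  assumes p: "Im p > 0" and x: "Im x > 0" and y: "Im y > 0" and z: "Im z > 0"
  shows "min (gromov p x z) (gromov p z y) - hyp_delta \<le> gromov p x y"
proof -
  let ?M = "move_to_i p"
  have M: "det ?M = 1"
    using det_move_to_i p by simp
  have "min (gromov \<i> (mob ?M x) (mob ?M z)) (gromov \<i> (mob ?M z) (mob ?M y)) - hyp_delta
        \<le> gromov \<i> (mob ?M x) (mob ?M y)"
    using Im_mob_pos[OF M] x y z by (intro gromov_four_point_i) auto
  then show ?thesis
    using gromov_mob[OF M p] mob_move_to_i[OF p] x y z by metis
qed

section \<open>Quasi-geodesic sequences in the hyperbolic plane\<close>

lemma hdist_le_steps:
  fixes x :: "int \<Rightarrow> complex"
  assumes step: "\<And>j. i \<le> j \<Longrightarrow> j < k \<Longrightarrow> hdist (x j) (x (j + 1)) \<le> S"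
    and im: "\<And>j. i \<le> j \<Longrightarrow> j \<le> k \<Longrightarrow> Im (x j) > 0"
    and "i \<le> k"
  shows "hdist (x i) (x k) \<le> S * (k - i)"
proof -
  have "j \<le> k \<longrightarrow> hdist (x i) (x j) \<le> S * (j - i)" if "i \<le> j" for j
    using that
  proof (induction j rule: int_ge_induct)
    case base
    then show ?case
      by simp
  next
    case (step j)
    show ?case
    proof
      assume "j + 1 \<le> k"
      have "hdist (x i) (x (j + 1)) \<le> hdist (x i) (x j) + hdist (x j) (x (j + 1))"
        using im step.hyps \<open>j + 1 \<le> k\<close> by (intro hdist_triangle) auto
      also have "\<dots> \<le> S * (j - i) + S"
        using step.IH assms(1)[of j] step.hyps \<open>j + 1 \<le> k\<close> by (intro add_mono) auto
      finally show "hdist (x i) (x (j + 1)) \<le> S * real_of_int (j + 1 - i)"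
        by (simp add: algebra_simps)
    qed
  qed
  then show ?thesis
    using assms(3) by simp
qed

lemma hdist_le_steps_abs:
  fixes x :: "int \<Rightarrow> complex"
  assumes "\<And>k. Im (x k) > 0" "\<And>k. hdist (x k) (x (k + 1)) \<le> S"
  shows "hdist (x j) (x k) \<le> S * \<bar>real_of_int (k - j)\<bar>"
proof (cases "j \<le> k")
  case True
  then show ?thesis
    using hdist_le_steps[of j k x S] assms by simp
next
  case False
  then show ?thesis
    using hdist_le_steps[of k j x S] assms by (simp add: hdist_commute)
qed

lemma gromov_four_point_chain3:
  assumes "Im p > 0" "Im x > 0" "Im a > 0" "Im b > 0" "Im y > 0"
  shows "min (gromov p x a) (min (gromov p a b) (gromov p b y)) - 2 * hyp_delta \<le> gromov p x y"
proof -
  have "min (gromov p a b) (gromov p b y) - hyp_delta \<le> gromov p a y"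
    "min (gromov p x a) (gromov p a y) - hyp_delta \<le> gromov p x y"
    using assms by (simp_all add: gromov_four_point)
  then show ?thesis
    using hyp_delta_nonneg by linarith
qed

text \<open>Bisect the chain and apply the four-point condition once per level.\<close>

lemma gromov_far_chain:
  fixes x :: "int \<Rightarrow> complex" and h :: nat
  assumes p: "Im p > 0"
    and far: "\<And>k. a \<le> k \<Longrightarrow> k \<le> b \<Longrightarrow> Im (x k) > 0 \<and> R \<le> hdist p (x k)"
    and step: "\<And>k. a \<le> k \<Longrightarrow> k < b \<Longrightarrow> hdist (x k) (x (k + 1)) \<le> S"
    and "S \<ge> 0" "a \<le> b" "b - a \<le> 2 ^ h"
  shows "R - S - h * hyp_delta \<le> gromov p (x a) (x b)"
  using far step assms(5,6)
proof (induction h arbitrary: a b)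
  case 0
  have "b - a \<le> 1"
    using "0.prems"(4) by simp
  then consider "b = a" | "b = a + 1"
    using "0.prems"(3) by linarith
  then show ?case
  proof cases
    case 1
    then show ?thesis
      using "0.prems"(1)[of a] \<open>S \<ge> 0\<close> by (simp add: gromov_def)
  next
    case 2
    then show ?thesis
      using "0.prems"(1)[of a] "0.prems"(1)[of b] "0.prems"(2)[of a] p
            hdist_diff_le_gromov[of p "x a" "x b"] by auto
  qed
next
  case (Suc h)
  show ?case
  proof (cases "b - a \<le> 2 ^ h")
    case True
    then have "R - S - h * hyp_delta \<le> gromov p (x a) (x b)"
      using Suc by blast
    then show ?thesis
      using hyp_delta_nonneg by (simp add: algebra_simps)
  next
    case False
    define m where "m = a + 2 ^ h"
    have "R - S - h * hyp_delta \<le> gromov p (x a) (x m)" "R - S - h * hyp_delta \<le> gromov p (x m) (x b)"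
      using Suc.prems False by (auto simp: m_def intro!: Suc.IH)
    moreover have "min (gromov p (x a) (x m)) (gromov p (x m) (x b)) - hyp_delta \<le> gromov p (x a) (x b)"
      using Suc.prems False p by (intro gromov_four_point) (auto simp: m_def)
    ultimately show ?thesis
      by (simp add: algebra_simps)
  qed
qed

lemma int_first_crossing:
  fixes a m :: int
  assumes "\<not> P a" "P m" "a \<le> m"
  obtains i where "a \<le> i" "i < m" "\<And>k. a \<le> k \<Longrightarrow> k \<le> i \<Longrightarrow> \<not> P k" "P (i + 1)"
proof -
  define t where "t = (LEAST t::nat. P (a + int t))"
  have Pm: "P (a + int (nat (m - a)))"
    using assms by simp
  have Pt: "P (a + int t)"
    unfolding t_def by (rule LeastI[of "\<lambda>t. P (a + int t)", OF Pm])
  have "t \<le> nat (m - a)"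
    unfolding t_def by (rule Least_le[of "\<lambda>t. P (a + int t)", OF Pm])
  have notP: "\<not> P (a + int s)" if "s < t" for s
    using not_less_Least[of s "\<lambda>t. P (a + int t)"] that by (simp add: t_def)
  have "t > 0"
    using Pt assms(1) by (cases t) auto
  show ?thesis
  proof (rule that[of "a + int t - 1"])
    show "\<not> P k" if "a \<le> k" "k \<le> a + int t - 1" for k
      using notP[of "nat (k - a)"] that by simp
  qed (use Pt \<open>t > 0\<close> \<open>t \<le> nat (m - a)\<close> in auto)
qed

lemma gromov_exit_point:
  fixes x :: "int \<Rightarrow> complex" and h :: nat
  assumes p: "Im p > 0" and S: "S \<ge> 0"
    and im: "\<And>k. a \<le> k \<Longrightarrow> k \<le> m \<Longrightarrow> Im (x k) > 0"
    and step: "\<And>k. a \<le> k \<Longrightarrow> k < m \<Longrightarrow> hdist (x k) (x (k + 1)) \<le> S"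
    and "R \<le> hdist p (x a)" "hdist p (x m) < R" "a \<le> m" "m - a \<le> 2 ^ h"
  obtains i where "a \<le> i" "i < m" "R \<le> hdist p (x i)" "hdist p (x i) < R + S"
    "R - S - h * hyp_delta \<le> gromov p (x a) (x i)"
proof -
  obtain i where i: "a \<le> i" "i < m" "\<And>k. a \<le> k \<Longrightarrow> k \<le> i \<Longrightarrow> R \<le> hdist p (x k)"
    "hdist p (x (i + 1)) < R"
    using int_first_crossing[of "\<lambda>k. hdist p (x k) < R" a m] assms(5-7) by (metis not_less)
  have "hdist p (x i) \<le> hdist p (x (i + 1)) + hdist (x (i + 1)) (x i)"
    using p im i by (intro hdist_triangle) auto
  then have "hdist p (x i) < R + S"
    using i step[of i] by (simp add: hdist_commute)
  moreover have "R - S - h * hyp_delta \<le> gromov p (x a) (x i)"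
    using i im step assms(8) S by (intro gromov_far_chain[OF p]) auto
  ultimately show ?thesis
    using that i by simp
qed

text \<open>The witnesses are the neighbours of the first and last points within distance \<open>R\<close> of \<open>x m\<close>;
  by the four-point condition their Gromov product at \<open>x m\<close> is still about \<open>R\<close>.\<close>

lemma gromov_pos_far_points_close:
  fixes x :: "int \<Rightarrow> complex" and h :: nat
  assumes im: "\<And>k. a \<le> k \<Longrightarrow> k \<le> b \<Longrightarrow> Im (x k) > 0"
    and step: "\<And>k. a \<le> k \<Longrightarrow> k < b \<Longrightarrow> hdist (x k) (x (k + 1)) \<le> S"
    and S: "S > 0" and "b - a \<le> 2 ^ h" and m: "a \<le> m" "m \<le> b"
    and R: "R = gromov (x m) (x a) (x b)" "R > 0"
  obtains i j where "a \<le> i" "i < m" "m < j" "j \<le> b" "R \<le> hdist (x m) (x i)" "R \<le> hdist (x m) (x j)"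
    "hdist (x i) (x j) \<le> 4 * S + 2 * real h * hyp_delta + 4 * hyp_delta"
proof -
  define p where "p = x m"
  have p: "Im p > 0" and ab: "Im (x a) > 0" "Im (x b) > 0"
    using im m by (auto simp: p_def)
  have far: "R \<le> hdist p (x a)" "R \<le> hdist p (x b)" "hdist p (x m) < R"
    using R gromov_le_hdist[OF p ab] gromov_le_hdist[OF p ab(2,1)] by (auto simp: p_def gromov_commute)
  obtain i where i: "a \<le> i" "i < m" "R \<le> hdist p (x i)" "hdist p (x i) < R + S"
    "R - S - h * hyp_delta \<le> gromov p (x a) (x i)"
    by (rule gromov_exit_point[of p S a m x R h]) (use p S im step far m assms(4) in auto)
  have step_rev: "hdist (x (- k)) (x (- (k + 1))) \<le> S" if "- b \<le> k" "k < - m" for k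
    using step[of "- k - 1"] that m by (simp add: hdist_commute)
  obtain j' where j': "- b \<le> j'" "j' < - m" "R \<le> hdist p (x (- j'))" "hdist p (x (- j')) < R + S"
    "R - S - h * hyp_delta \<le> gromov p (x b) (x (- j'))"
    by (rule gromov_exit_point[of p S "- b" "- m" "\<lambda>k. x (- k)" R h])
       (use p S im step_rev far m assms(4) in auto)
  define j where "j = - j'"
  have "R - S - h * hyp_delta \<le> min (gromov p (x i) (x a)) (min (gromov p (x a) (x b)) (gromov p (x b) (x j)))"
    using i(5) j'(5) S R(1) mult_nonneg_nonneg[OF _ hyp_delta_nonneg, of "real h"]
    by (auto simp: p_def j_def gromov_commute[of "x m" "x i"])
  moreover have "min (gromov p (x i) (x a)) (min (gromov p (x a) (x b)) (gromov p (x b) (x j)))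
      - 2 * hyp_delta \<le> gromov p (x i) (x j)"
    by (rule gromov_four_point_chain3) (use p im i j' m in \<open>auto simp: j_def\<close>)
  ultimately have "R - S - h * hyp_delta - 2 * hyp_delta \<le> gromov p (x i) (x j)"
    by linarith
  then have "hdist (x i) (x j) \<le> 4 * S + 2 * real h * hyp_delta + 4 * hyp_delta"
    using hdist_eq_gromov[of "x i" "x j" p] i j' by (simp add: j_def algebra_simps)
  then show ?thesis
    using that[of i j] i j' by (simp add: p_def j_def)
qed

text \<open>A quantitative Morse lemma; the bound is linear in \<open>h\<close>, i.e.\ logarithmic in the length.\<close>

lemma gromov_on_quasi_geodesic_le:
  fixes x :: "int \<Rightarrow> complex" and h :: nat
  assumes im: "\<And>k. a \<le> k \<Longrightarrow> k \<le> b \<Longrightarrow> Im (x k) > 0"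
    and step: "\<And>k. a \<le> k \<Longrightarrow> k < b \<Longrightarrow> hdist (x k) (x (k + 1)) \<le> S"
    and lower: "\<And>j k. a \<le> j \<Longrightarrow> j \<le> b \<Longrightarrow> a \<le> k \<Longrightarrow> k \<le> b \<Longrightarrow>
                  \<bar>real_of_int (j - k)\<bar> / C - \<epsilon> \<le> hdist (x j) (x k)"
    and S: "S > 0" and C: "C > 0" and "\<epsilon> \<ge> 0" and "b - a \<le> 2 ^ h" and m: "a \<le> m" "m \<le> b"
  shows "gromov (x m) (x a) (x b) \<le> S * C * (4 * S + 2 * real h * hyp_delta + 4 * hyp_delta + \<epsilon>) / 2"
    (is "?R \<le> S * C * (?K + \<epsilon>) / 2")
proof (cases "?R \<le> 0")
  case True
  have "0 \<le> S * C * (?K + \<epsilon>) / 2"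
    using S C \<open>\<epsilon> \<ge> 0\<close> hyp_delta_nonneg by simp
  then show ?thesis
    using True by linarith
next
  case False
  obtain i j where ij: "a \<le> i" "i < m" "m < j" "j \<le> b" "?R \<le> hdist (x m) (x i)" "?R \<le> hdist (x m) (x j)"
    "hdist (x i) (x j) \<le> ?K"
    by (rule gromov_pos_far_points_close[where x=x and h=h and a=a and b=b and S=S and m=m
           and R="gromov (x m) (x a) (x b)"]) (use im step S assms(7) m False in auto)
  have "real_of_int (j - i) / C - \<epsilon> \<le> hdist (x i) (x j)"
    using lower[of i j] ij m by (simp add: abs_minus_commute[of "real_of_int i"])
  then have "real_of_int (j - i) / C \<le> ?K + \<epsilon>"
    using ij(7) by linarith
  then have "real_of_int (j - i) \<le> C * (?K + \<epsilon>)"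
    using C by (simp add: divide_le_eq mult.commute)
  have "hdist (x i) (x m) \<le> S * (m - i)" "hdist (x m) (x j) \<le> S * (j - m)"
    using step im ij m by (intro hdist_le_steps; force)+
  then have "2 * ?R \<le> S * (j - i)"
    using ij(5,6) by (simp add: hdist_commute[of "x i"] algebra_simps)
  also have "\<dots> \<le> S * (C * (?K + \<epsilon>))"
    using S \<open>real_of_int (j - i) \<le> C * (?K + \<epsilon>)\<close> by (intro mult_left_mono) auto
  finally show ?thesis
    by (simp add: algebra_simps)
qed

lemma gromov_chain_step:
  assumes "Im z > 0" "Im u > 0" "Im q > 0" "Im v > 0"
    and "gromov u z q \<le> c + hyp_delta" "gromov q u v \<le> c" "D \<le> hdist u q" "2 * c + 2 * hyp_delta < D"
  shows "gromov q z v \<le> c + hyp_delta"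
proof (rule ccontr)
  assume "\<not> ?thesis"
  moreover have "gromov q u z = hdist u q - gromov u z q"
    using gromov_swap[of q u z] gromov_commute[of u q z] by simp
  moreover have "min (gromov q u z) (gromov q z v) - hyp_delta \<le> gromov q u v"
    using assms(1-4) by (intro gromov_four_point) auto
  ultimately show False
    using assms(5-8) by linarith
qed

lemma hdist_chain_growth:
  fixes y :: "nat \<Rightarrow> complex"
  assumes im: "\<And>k. k \<le> N \<Longrightarrow> Im (y k) > 0"
    and small: "\<And>i. 0 < i \<Longrightarrow> i < N \<Longrightarrow> gromov (y i) (y (i - 1)) (y (i + 1)) \<le> c"
    and far: "\<And>i. i < N \<Longrightarrow> D \<le> hdist (y i) (y (i + 1))"
    and "c \<ge> 0" and D: "2 * c + 2 * hyp_delta < D"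
  shows "real N * (D - 2 * c - 2 * hyp_delta) \<le> hdist (y 0) (y N)"
proof -
  have "n + 1 \<le> N \<longrightarrow> gromov (y n) (y 0) (y (n + 1)) \<le> c + hyp_delta
        \<and> real (n + 1) * (D - 2 * c - 2 * hyp_delta) \<le> hdist (y 0) (y (n + 1))" for n
  proof (induction n)
    case 0
    show ?case
      using far[of 0] \<open>c \<ge> 0\<close> hyp_delta_nonneg by (auto simp: gromov_def)
  next
    case (Suc n)
    show ?case
    proof
      assume N: "Suc n + 1 \<le> N"
      let ?o = "y 0" and ?u = "y n" and ?q = "y (n + 1)" and ?v = "y (n + 2)"
      have gromov_v: "gromov ?q ?o ?v \<le> c + hyp_delta"
        using Suc.IH N im small[of "n + 1"] far[of n]
        by (intro gromov_chain_step[of ?o ?u ?q ?v c D] D) auto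
      have "hdist ?o ?v = hdist ?q ?o + hdist ?q ?v - 2 * gromov ?q ?o ?v"
        by (rule hdist_eq_gromov)
      moreover have "D \<le> hdist ?q ?v"
        using far[of "n + 1"] N by (simp add: numeral_2_eq_2)
      ultimately have "real (n + 1) * (D - 2 * c - 2 * hyp_delta) + (D - 2 * c - 2 * hyp_delta)
          \<le> hdist ?o ?v"
        using Suc.IH N gromov_v hdist_commute[of ?o ?q] by auto
      then show "gromov (y (Suc n)) ?o (y (Suc n + 1)) \<le> c + hyp_delta
          \<and> real (Suc n + 1) * (D - 2 * c - 2 * hyp_delta) \<le> hdist ?o (y (Suc n + 1))"
        using gromov_v by (simp add: numeral_2_eq_2 algebra_simps)
    qed
  qed
  then show ?thesis
    by (cases N) auto
qed

lemma hdist_sample_growth: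
  fixes x :: "int \<Rightarrow> complex" and L :: nat
  assumes im: "\<And>k. Im (x k) > 0"
    and small: "\<And>m. gromov (x m) (x (m - L)) (x (m + L)) \<le> c"
    and far: "\<And>m. D \<le> hdist (x m) (x (m + L))"
    and "c \<ge> 0" and D: "1 \<le> D - 2 * c - 2 * hyp_delta"
  shows "real N \<le> hdist (x j) (x (j + int N * L))"
proof -
  define y where "y i = x (j + int i * L)" for i
  have "real N * (D - 2 * c - 2 * hyp_delta) \<le> hdist (y 0) (y N)"
  proof (rule hdist_chain_growth)
    show "gromov (y i) (y (i - 1)) (y (i + 1)) \<le> c" if "0 < i" for i
      using small[of "j + int i * L"] that by (simp add: y_def of_nat_diff algebra_simps)
    show "D \<le> hdist (y i) (y (i + 1))" for i
      using far[of "j + int i * L"] by (simp add: y_def algebra_simps)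
  qed (use im D \<open>c \<ge> 0\<close> in \<open>auto simp: y_def\<close>)
  moreover have "real N \<le> real N * (D - 2 * c - 2 * hyp_delta)"
    using mult_left_mono[OF D, of "real N"] by simp
  ultimately show ?thesis
    by (simp add: y_def)
qed

lemma quasi_geodesic_local_to_global:
  fixes x :: "int \<Rightarrow> complex" and L :: nat
  assumes im: "\<And>k. Im (x k) > 0" and step: "\<And>k. hdist (x k) (x (k + 1)) \<le> S"
    and L: "L \<ge> 1"
    and small: "\<And>m. gromov (x m) (x (m - L)) (x (m + L)) \<le> c"
    and far: "\<And>m. D \<le> hdist (x m) (x (m + L))"
    and "c \<ge> 0" and D: "1 \<le> D - 2 * c - 2 * hyp_delta"
  shows "\<bar>real_of_int (k - j)\<bar> / L - 1 - S * L \<le> hdist (x j) (x k)"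
proof -
  have S: "S \<ge> 0"
    using step[of 0] hdist_nonneg[OF im im] by (meson order_trans)
  have "real_of_int (k - j) / L - 1 - S * L \<le> hdist (x j) (x k)" if jk: "j \<le> k" for j k
  proof -
    define N where "N = nat ((k - j) div L)"
    have N: "int N = (k - j) div L"
      using L jk by (simp add: N_def pos_imp_zdiv_nonneg_iff)
    then have "k - (j + N * L) = (k - j) mod L"
      by (simp add: minus_div_mult_eq_mod[symmetric])
    moreover have "0 \<le> (k - j) mod L" "(k - j) mod L < L"
      using L by simp_all
    ultimately have "j + N * L \<le> k" "k - (j + N * L) \<le> L"
      by linarith+
    then have "hdist (x (j + N * L)) (x k) \<le> S * real_of_int (k - (j + N * L))"
      using hdist_le_steps[of "j + N * L" k x S] step im by simp
    also have "\<dots> \<le> S * L"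
      using S of_int_le_iff[where 'a=real, THEN iffD2, OF \<open>k - (j + N * L) \<le> L\<close>]
      by (intro mult_left_mono) simp_all
    finally have "hdist (x k) (x (j + N * L)) \<le> S * L"
      by (simp add: hdist_commute)
    moreover have "real_of_int (k - j) / L - 1 \<le> real N"
      using real_of_int_floor_gt_diff_one[of "real_of_int (k - j) / real L"] N
      by (simp add: floor_divide_of_int_eq[of "k - j" "int L", simplified])
    moreover have "hdist (x j) (x (j + N * L)) \<le> hdist (x j) (x k) + hdist (x k) (x (j + N * L))"
      using im by (intro hdist_triangle)
    ultimately show ?thesis
      using hdist_sample_growth[OF im small far \<open>c \<ge> 0\<close> D, of N j] by simp
  qed
  from this[of j k] this[of k j] show ?thesis
    by (cases "j \<le> k") (auto simp: hdist_commute)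
qed

lemma quasi_geodesic_interpolation:
  fixes x :: "int \<Rightarrow> complex" and \<gamma> :: "real \<Rightarrow> complex" and L :: real
  assumes im: "\<And>k. Im (x k) > 0" and im_\<gamma>: "\<And>t. Im (\<gamma> t) > 0"
    and near: "\<And>t. hdist (x \<lfloor>t\<rfloor>) (\<gamma> t) \<le> S"
    and step: "\<And>k. hdist (x k) (x (k + 1)) \<le> S"
    and lower: "\<And>j k. \<bar>real_of_int (k - j)\<bar> / L - B \<le> hdist (x j) (x k)"
    and L: "L \<ge> 1"
  shows "\<bar>t - s\<bar> / max L S - (B + 1 + 2 * S) \<le> hdist (\<gamma> t) (\<gamma> s)"
    and "hdist (\<gamma> t) (\<gamma> s) \<le> max L S * \<bar>t - s\<bar> + 3 * S"
proof -
  have S: "S \<ge> 0"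
    using near[of 0] hdist_nonneg[OF im im_\<gamma>] by (meson order_trans)
  have floors: "\<bar>t - s\<bar> - 1 \<le> \<bar>real_of_int (\<lfloor>s\<rfloor> - \<lfloor>t\<rfloor>)\<bar>" "\<bar>real_of_int (\<lfloor>s\<rfloor> - \<lfloor>t\<rfloor>)\<bar> \<le> \<bar>t - s\<bar> + 1"
    by (simp_all add: abs_if; linarith)+
  have tri: "hdist (x \<lfloor>t\<rfloor>) (x \<lfloor>s\<rfloor>) \<le> hdist (\<gamma> t) (\<gamma> s) + 2 * S"
    "hdist (\<gamma> t) (\<gamma> s) \<le> hdist (x \<lfloor>t\<rfloor>) (x \<lfloor>s\<rfloor>) + 2 * S"
    using hdist_triangle[of "x \<lfloor>t\<rfloor>" "\<gamma> t" "x \<lfloor>s\<rfloor>"] hdist_triangle[of "\<gamma> t" "\<gamma> s" "x \<lfloor>s\<rfloor>"]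
          hdist_triangle[of "\<gamma> t" "x \<lfloor>t\<rfloor>" "\<gamma> s"] hdist_triangle[of "x \<lfloor>t\<rfloor>" "x \<lfloor>s\<rfloor>" "\<gamma> s"]
          near[of t] near[of s] im im_\<gamma>
    by (simp_all add: hdist_commute)
  have "\<bar>t - s\<bar> / L - 1 / L \<le> \<bar>real_of_int (\<lfloor>s\<rfloor> - \<lfloor>t\<rfloor>)\<bar> / L"
    using floors L by (simp add: divide_right_mono flip: diff_divide_distrib)
  moreover have "\<bar>t - s\<bar> / max L S \<le> \<bar>t - s\<bar> / L" "1 / L \<le> 1"
    using L by (simp_all add: frac_le)
  moreover have "\<bar>real_of_int (\<lfloor>s\<rfloor> - \<lfloor>t\<rfloor>)\<bar> / L - B \<le> hdist (x \<lfloor>t\<rfloor>) (x \<lfloor>s\<rfloor>)"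
    by (rule lower)
  ultimately show "\<bar>t - s\<bar> / max L S - (B + 1 + 2 * S) \<le> hdist (\<gamma> t) (\<gamma> s)"
    using tri(1) by linarith
  have "hdist (x \<lfloor>t\<rfloor>) (x \<lfloor>s\<rfloor>) \<le> S * (\<bar>t - s\<bar> + 1)"
    using hdist_le_steps_abs[of x S, OF im step, of "\<lfloor>t\<rfloor>" "\<lfloor>s\<rfloor>"] floors S
    by (meson mult_left_mono order_trans)
  moreover have "S * \<bar>t - s\<bar> \<le> max L S * \<bar>t - s\<bar>"
    by (simp add: mult_right_mono)
  ultimately show "hdist (\<gamma> t) (\<gamma> s) \<le> max L S * \<bar>t - s\<bar> + 3 * S"
    using tri(2) by (simp add: algebra_simps)
qed

section \<open>Orbit paths of words\<close>

definition sl2_rep :: "nat \<Rightarrow> (nat \<Rightarrow> m2) \<Rightarrow> bool" where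
  "sl2_rep r A \<longleftrightarrow> (\<forall>i<r. det (A i) = 1)"

lemma eval_Nil [simp]: "eval A [] = mat 1"
  by (simp add: eval_def)

lemma eval_Cons [simp]: "eval A (x # u) = letter_mat A x ** eval A u"
  by (simp add: eval_def)

lemma eval_append: "eval A (u @ v) = eval A u ** eval A v"
  by (induction u) (simp_all add: matrix_mul_assoc)

lemma word_over_Cons: "word_over r (x # u) \<longleftrightarrow> fst x < r \<and> word_over r u"
  by (simp add: word_over_def)

lemma word_over_append: "word_over r (u @ v) \<longleftrightarrow> word_over r u \<and> word_over r v"
  by (auto simp: word_over_def)

lemma word_over_winv: "word_over r u \<Longrightarrow> word_over r (winv u)"
  by (auto simp: word_over_def winv_def inv_letter_def)

lemma word_over_concat_replicate: "word_over r u \<Longrightarrow> word_over r (concat (replicate n u))"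
  by (induction n) (auto simp: word_over_def)

lemma word_over_take: "word_over r u \<Longrightarrow> word_over r (take n u)"
  by (auto simp: word_over_def dest: in_set_takeD)

lemma det_letter_mat: "sl2_rep r A \<Longrightarrow> fst x < r \<Longrightarrow> det (letter_mat A x) = 1"
  by (auto simp: letter_mat_def sl2_rep_def matrix_inv_eq_adj2)

lemma det_eval: "sl2_rep r A \<Longrightarrow> word_over r u \<Longrightarrow> det (eval A u) = 1"
  by (induction u) (auto simp: word_over_Cons det_mul det_letter_mat)

lemma eval_winv_mult:
  assumes "sl2_rep r A" "word_over r u"
  shows "eval A (winv u) ** eval A u = mat 1"
  using assms(2)
proof (induction u)
  case (Cons x u)
  have "letter_mat A (inv_letter x) ** letter_mat A x = mat 1"
    using assms(1) Cons.prems
    by (auto simp: word_over_Cons letter_mat_def inv_letter_def sl2_rep_def matrix_inv_eq_adj2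
                   mult_adj2_left mult_adj2_right)
  moreover have "eval A (winv (x # u)) ** eval A (x # u)
      = eval A (winv u) ** ((letter_mat A (inv_letter x) ** letter_mat A x) ** eval A u)"
    by (simp add: winv_def eval_append matrix_mul_assoc)
  ultimately have "eval A (winv (x # u)) ** eval A (x # u) = eval A (winv u) ** eval A u"
    by simp
  then show ?case
    using Cons by (simp add: word_over_Cons)
qed (simp add: winv_def)

definition word_power :: "word \<Rightarrow> int \<Rightarrow> word" where
  "word_power w q = (if q \<ge> 0 then concat (replicate (nat q) w) else concat (replicate (nat (- q)) (winv w)))"

lemma vert_eq_word_power: "vert w k = word_power w (k div length w) @ take (nat (k mod length w)) w"
  by (simp add: vert_def word_power_def Let_def)

lemma word_over_vert: "word_over r w \<Longrightarrow> word_over r (vert w k)"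
  by (simp add: vert_eq_word_power word_power_def word_over_append word_over_concat_replicate
                word_over_winv word_over_take)

lemma eval_word_power_add_1:
  assumes "sl2_rep r A" "word_over r w"
  shows "eval A (word_power w (q + 1)) = eval A (word_power w q) ** eval A w"
proof -
  have rep: "eval A (concat (replicate (Suc n) u)) = eval A (concat (replicate n u)) ** eval A u" for n u
    by (simp add: eval_append flip: replicate_append_same)
  consider "q \<ge> 0" | "q = -1" | "q + 1 < 0"
    by linarith
  then show ?thesis
  proof cases
    case 1
    then have "nat (q + 1) = Suc (nat q)"
      by simp
    then show ?thesis
      using 1 by (simp add: word_power_def rep del: replicate_Suc)
  next
    case 2
    then show ?thesis
      using eval_winv_mult[OF assms] by (simp add: word_power_def)
  next
    case 3
    then have "nat (- q) = Suc (nat (- (q + 1)))"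
      by simp
    then have "eval A (word_power w q) ** eval A w = eval A (word_power w (q + 1)) ** (eval A (winv w) ** eval A w)"
      using 3 by (simp add: word_power_def rep matrix_mul_assoc del: replicate_Suc)
    then show ?thesis
      using eval_winv_mult[OF assms] by simp
  qed
qed

lemma eval_vert_add_1:
  assumes A: "sl2_rep r A" and w: "word_over r w" "w \<noteq> []"
  shows "eval A (vert w (k + 1)) = eval A (vert w k) ** letter_mat A (w ! nat (k mod length w))"
proof -
  define m where "m = int (length w)"
  have m: "m > 0"
    using w by (simp add: m_def)
  define q where "q = k div m"
  define r' where "r' = k mod m"
  have k: "k = r' + q * m" "0 \<le> r'" "r' < m"
    using m by (auto simp: q_def r'_def)
  have v: "vert w j = word_power w (j div m) @ take (nat (j mod m)) w" for j
    by (simp add: vert_eq_word_power m_def)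
  have take_Suc: "eval A (take (Suc n) w) = eval A (take n w) ** letter_mat A (w ! n)" if "n < length w" for n
    using that by (simp add: take_Suc_conv_app_nth eval_append)
  show ?thesis
  proof (cases "r' + 1 < m")
    case True
    have e: "k + 1 = (r' + 1) + q * m"
      using k by simp
    have "(k + 1) div m = q" "(k + 1) mod m = r' + 1"
      unfolding e using m k True by (simp_all add: div_mult_self1 mod_mult_self1)
    moreover have "nat (r' + 1) = Suc (nat r')" "nat r' < length w"
      using k True by (auto simp: m_def)
    ultimately show ?thesis
      by (simp add: v eval_append take_Suc matrix_mul_assoc flip: q_def r'_def m_def)
  next
    case False
    have e: "k + 1 = 0 + (q + 1) * m"
      using k False by (simp add: algebra_simps)
    have "(k + 1) div m = q + 1" "(k + 1) mod m = 0"
      unfolding e using m by (simp_all add: div_mult_self1 mod_mult_self1)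
    moreover have "Suc (nat r') = length w" "nat r' < length w"
      using False k unfolding m_def by linarith+
    ultimately show ?thesis
      using take_Suc[of "nat r'"]
      by (simp add: v eval_append eval_word_power_add_1[OF A w(1)] matrix_mul_assoc flip: q_def r'_def m_def)
  qed
qed

definition cyclic_segment :: "word \<Rightarrow> int \<Rightarrow> nat \<Rightarrow> word" where
  "cyclic_segment w k j = map (\<lambda>i. w ! nat ((k + int i) mod length w)) [0..<j]"

lemma length_cyclic_segment [simp]: "length (cyclic_segment w k j) = j"
  by (simp add: cyclic_segment_def)

lemma cyclic_segment_1: "cyclic_segment w k 1 = [w ! nat (k mod length w)]"
  by (simp add: cyclic_segment_def)

lemma nth_mod_length_in_set: "w \<noteq> [] \<Longrightarrow> w ! nat ((k::int) mod length w) \<in> set w"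
  by (intro nth_mem) (simp add: nat_less_iff)

lemma word_over_cyclic_segment:
  assumes "word_over r w" "w \<noteq> []"
  shows "word_over r (cyclic_segment w k j)"
proof -
  have "w ! nat ((k + int i) mod length w) \<in> set w" for i
    using nth_mod_length_in_set[OF assms(2)] .
  then show ?thesis
    using assms(1) by (auto simp: cyclic_segment_def word_over_def)
qed

lemma eval_vert_add:
  assumes A: "sl2_rep r A" and w: "word_over r w" "w \<noteq> []"
  shows "eval A (vert w (k + int j)) = eval A (vert w k) ** eval A (cyclic_segment w k j)"
proof (induction j)
  case (Suc j)
  have "eval A (vert w (k + int (Suc j))) = eval A (vert w ((k + int j) + 1))"
    by (simp add: ac_simps)
  also have "\<dots> = eval A (vert w k) ** eval A (cyclic_segment w k (Suc j))"
    by (simp add: eval_vert_add_1[OF A w] Suc cyclic_segment_def eval_append matrix_mul_assoc)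
  finally show ?case .
qed (simp add: cyclic_segment_def)

definition orbit_pt :: "(nat \<Rightarrow> m2) \<Rightarrow> complex \<Rightarrow> word \<Rightarrow> int \<Rightarrow> complex" where
  "orbit_pt A z w k = mob (eval A (vert w k)) z"

definition displacement :: "(nat \<Rightarrow> m2) \<Rightarrow> complex \<Rightarrow> word \<Rightarrow> real" where
  "displacement A z u = hdist z (mob (eval A u) z)"

lemma Im_orbit_pt: "sl2_rep r A \<Longrightarrow> word_over r w \<Longrightarrow> Im z > 0 \<Longrightarrow> Im (orbit_pt A z w k) > 0"
  unfolding orbit_pt_def by (rule Im_mob_pos) (auto intro: det_eval word_over_vert)

lemma displacement_nonneg: "sl2_rep r A \<Longrightarrow> word_over r u \<Longrightarrow> Im z > 0 \<Longrightarrow> displacement A z u \<ge> 0"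
  unfolding displacement_def by (rule hdist_nonneg) (auto intro: Im_mob_pos det_eval)

lemma hdist_orbit_pt:
  assumes A: "sl2_rep r A" and w: "word_over r w" "w \<noteq> []" and z: "Im z > 0"
  shows "hdist (orbit_pt A z w k) (orbit_pt A z w (k + int j)) = displacement A z (cyclic_segment w k j)"
proof -
  have d: "det (eval A (vert w k)) = 1" "det (eval A (cyclic_segment w k j)) = 1"
    using det_eval[OF A] word_over_vert[OF w(1)] word_over_cyclic_segment[OF w] by auto
  then have "orbit_pt A z w (k + int j) = mob (eval A (vert w k)) (mob (eval A (cyclic_segment w k j)) z)"
    by (simp add: orbit_pt_def eval_vert_add[OF A w] mob_mult z)
  then show ?thesis
    using hdist_mob[OF d(1) z Im_mob_pos[OF d(2) z]] by (simp add: orbit_pt_def displacement_def)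
qed

lemma gamma_eq_geod_pt:
  "gamma A z w t = geod_pt (orbit_pt A z w \<lfloor>t\<rfloor>) (orbit_pt A z w (\<lfloor>t\<rfloor> + 1)) (t - of_int \<lfloor>t\<rfloor>)"
  by (simp add: gamma_def orbit_pt_def)

lemma gamma_of_int:
  assumes "sl2_rep r A" "word_over r w" "Im z > 0"
  shows "gamma A z w (of_int k) = orbit_pt A z w k"
  using geod_pt_0[OF Im_orbit_pt[OF assms] Im_orbit_pt[OF assms]] by (simp add: gamma_eq_geod_pt)

lemma gamma_near_orbit_pt:
  assumes "sl2_rep r A" "word_over r w" "Im z > 0"
  shows "Im (gamma A z w t) > 0"
    and "hdist (orbit_pt A z w \<lfloor>t\<rfloor>) (gamma A z w t) \<le> hdist (orbit_pt A z w \<lfloor>t\<rfloor>) (orbit_pt A z w (\<lfloor>t\<rfloor> + 1))"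
proof -
  let ?s = "t - of_int \<lfloor>t\<rfloor>"
  have s: "0 \<le> ?s" "?s \<le> 1"
    by linarith+
  note pts = Im_orbit_pt[OF assms, of "\<lfloor>t\<rfloor>"] Im_orbit_pt[OF assms, of "\<lfloor>t\<rfloor> + 1"]
  show "Im (gamma A z w t) > 0"
    using geod_pt_spec(1)[OF pts s] by (simp add: gamma_eq_geod_pt)
  show "hdist (orbit_pt A z w \<lfloor>t\<rfloor>) (gamma A z w t) \<le> hdist (orbit_pt A z w \<lfloor>t\<rfloor>) (orbit_pt A z w (\<lfloor>t\<rfloor> + 1))"
    using geod_pt_spec(2)[OF pts s] s hdist_nonneg[OF pts] by (simp add: gamma_eq_geod_pt mult_left_le_one_le)
qed

section \<open>Perturbing uniform quasi-geodesics\<close>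

lemma square_le_power2: "n \<ge> 4 \<Longrightarrow> n\<^sup>2 \<le> (2::nat) ^ n"
proof (induction n rule: dec_induct)
  case (step n)
  have "(Suc n)\<^sup>2 = n\<^sup>2 + 2 * n + 1"
    by (simp add: power2_eq_square)
  also have "\<dots> \<le> n\<^sup>2 + n\<^sup>2"
    using mult_le_mono1[OF step(1), of n] step(1) unfolding power2_eq_square by linarith
  also have "\<dots> \<le> 2 ^ Suc n"
    using step(3) by simp
  finally show ?case .
qed simp

lemma exists_linear_le_power2: "\<exists>h::nat. a * real h + b \<le> 2 ^ h"
proof -
  define n where "n = nat \<lceil>\<bar>a\<bar> + \<bar>b\<bar>\<rceil> + 4"
  have n: "n \<ge> 4" "real n \<ge> \<bar>a\<bar> + \<bar>b\<bar>"
    unfolding n_def by linarith+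
  have "a * real n + b \<le> \<bar>a\<bar> * real n + \<bar>b\<bar> * real n"
    using n by (intro add_mono mult_right_mono) (auto intro: order_trans[OF abs_ge_self] simp: mult_le_cancel_left1)
  also have "\<dots> \<le> real n * real n"
    using n by (simp add: mult_right_mono flip: distrib_right)
  also have "\<dots> \<le> 2 ^ n"
    using square_le_power2[OF n(1)] by (simp add: power2_eq_square flip: of_nat_mult)
  finally show ?thesis
    by blast
qed

lemma local_to_global_scale:
  fixes h :: nat
  assumes C: "C \<ge> 1"
    and h: "2 * S * C\<^sup>2 * hyp_delta * h + C * (\<epsilon> + 5 + 2 * hyp_delta + S * C * (\<epsilon> + 4 * S + 6 * hyp_delta)) \<le> 2 ^ h"
  shows "1 \<le> (2 ^ h / C - \<epsilon> - 1)
              - 2 * (S * C * (4 * S + 2 * real (Suc h) * hyp_delta + 4 * hyp_delta + \<epsilon>) / 2 + 3 / 2)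
              - 2 * hyp_delta"
proof -
  have "(2 * S * C\<^sup>2 * hyp_delta * h + C * (\<epsilon> + 5 + 2 * hyp_delta + S * C * (\<epsilon> + 4 * S + 6 * hyp_delta))) / C
      \<le> 2 ^ h / C"
    using h C by (simp add: divide_right_mono)
  moreover have "(2 * S * C\<^sup>2 * hyp_delta * h + C * (\<epsilon> + 5 + 2 * hyp_delta + S * C * (\<epsilon> + 4 * S + 6 * hyp_delta))) / C
      = 2 * S * C * hyp_delta * h + (\<epsilon> + 5 + 2 * hyp_delta + S * C * (\<epsilon> + 4 * S + 6 * hyp_delta))"
    using C by (simp add: power2_eq_square field_simps)
  moreover have "2 * (S * C * (4 * S + 2 * real (Suc h) * hyp_delta + 4 * hyp_delta + \<epsilon>) / 2 + 3 / 2)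
      = S * C * (\<epsilon> + 4 * S + 6 * hyp_delta) + 2 * S * C * hyp_delta * h + 3"
    by (simp add: algebra_simps)
  ultimately show ?thesis
    by linarith
qed

lemma gromov_le_of_hdist_close:
  assumes "\<bar>hdist p' x' - hdist p x\<bar> < 1" "\<bar>hdist p' y' - hdist p y\<bar> < 1" "\<bar>hdist x' y' - hdist x y\<bar> < 1"
  shows "gromov p' x' y' < gromov p x y + 3 / 2"
  using assms unfolding gromov_def abs_less_iff by argo

text \<open>Closeness at scale \<open>2L\<close> transfers the Morse bound at the midpoints and the growth at
  scale \<open>L\<close> from \<open>x\<close> to \<open>y\<close>; the local-to-global principle does the rest.\<close>

lemma quasi_geodesic_of_locally_close:
  fixes x y :: "int \<Rightarrow> complex" and h :: nat
  assumes im: "\<And>k. Im (x k) > 0" "\<And>k. Im (y k) > 0"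
    and x_step: "\<And>k. hdist (x k) (x (k + 1)) \<le> S - 1"
    and x_lower: "\<And>j k. \<bar>real_of_int (j - k)\<bar> / C - \<epsilon> \<le> hdist (x j) (x k)"
    and close: "\<And>j k. j \<le> k \<Longrightarrow> k - j \<le> 2 ^ Suc h \<Longrightarrow> \<bar>hdist (y j) (y k) - hdist (x j) (x k)\<bar> < 1"
    and S: "S \<ge> 1" and C: "C \<ge> 1" and \<epsilon>: "\<epsilon> > 0"
    and h: "2 * S * C\<^sup>2 * hyp_delta * h + C * (\<epsilon> + 5 + 2 * hyp_delta + S * C * (\<epsilon> + 4 * S + 6 * hyp_delta)) \<le> 2 ^ h"
  shows "hdist (y k) (y (k + 1)) \<le> S"
    and "\<bar>real_of_int (k - j)\<bar> / 2 ^ h - 1 - S * 2 ^ h \<le> hdist (y j) (y k)"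
proof -
  define L :: nat where "L = 2 ^ h"
  have close_L: "\<bar>hdist (y j) (y k) - hdist (x j) (x k)\<bar> < 1" if "j \<le> k" "k - j \<le> 2 * L" for j k :: int
    using close that by (simp add: L_def)
  have "L \<ge> 1"
    by (simp add: L_def)
  then have "(1::int) \<le> 2 * int L"
    by linarith
  then show y_step: "hdist (y k) (y (k + 1)) \<le> S" for k
    using close_L[of k "k + 1"] x_step[of k] by (simp add: abs_less_iff)
  define c where "c = S * C * (4 * S + 2 * real (Suc h) * hyp_delta + 4 * hyp_delta + \<epsilon>) / 2"
  have x_gromov: "gromov (x m) (x (m - L)) (x (m + L)) \<le> c" for m
    unfolding c_def
  proof (rule gromov_on_quasi_geodesic_le)
    show "hdist (x k) (x (k + 1)) \<le> S" for k
      using x_step[of k] by simp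
    show "m + int L - (m - int L) \<le> 2 ^ Suc h"
      by (simp add: L_def)
  qed (use im x_lower S C \<epsilon> in auto)
  have y_gromov: "gromov (y m) (y (m - L)) (y (m + L)) \<le> c + 3 / 2" for m
  proof -
    have "gromov (y m) (y (m - L)) (y (m + L)) < gromov (x m) (x (m - L)) (x (m + L)) + 3 / 2"
      using close_L[of "m - L" m] close_L[of m "m + L"] close_L[of "m - L" "m + L"]
      by (intro gromov_le_of_hdist_close) (simp_all add: hdist_commute[of "y m"] hdist_commute[of "x m"])
    then show ?thesis
      using x_gromov[of m] by simp
  qed
  have y_far: "real L / C - \<epsilon> - 1 \<le> hdist (y m) (y (m + L))" for m
    using close_L[of m "m + L"] x_lower[of m "m + L"] by (simp add: abs_less_iff)
  have "0 \<le> c + 3 / 2"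
    using S C \<epsilon> hyp_delta_nonneg by (simp add: c_def)
  moreover have "1 \<le> (real L / C - \<epsilon> - 1) - 2 * (c + 3 / 2) - 2 * hyp_delta"
    using local_to_global_scale[OF C h] by (simp add: L_def c_def)
  ultimately have "\<bar>real_of_int (k - j)\<bar> / L - 1 - S * L \<le> hdist (y j) (y k)"
    using \<open>L \<ge> 1\<close> by (intro quasi_geodesic_local_to_global[OF im(2) y_step _ y_gromov y_far])
  then show "\<bar>real_of_int (k - j)\<bar> / 2 ^ h - 1 - S * 2 ^ h \<le> hdist (y j) (y k)"
    by (simp add: L_def)
qed

definition uniformly_quasi_geodesic :: "word set \<Rightarrow> (nat \<Rightarrow> m2) \<Rightarrow> complex \<Rightarrow> bool" where
  "uniformly_quasi_geodesic W A z \<longleftrightarrow> (\<exists>C \<epsilon>. C \<ge> 1 \<and> \<epsilon> > 0 \<and> (\<forall>w\<in>W. \<forall>t s.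
      \<bar>t - s\<bar> / C - \<epsilon> \<le> hdist (gamma A z w t) (gamma A z w s) \<and>
      hdist (gamma A z w t) (gamma A z w s) \<le> C * \<bar>t - s\<bar> + \<epsilon>))"

lemma orbit_path_quasi_geodesic_of_close:
  fixes h :: nat
  assumes A: "sl2_rep r A" and A': "sl2_rep r A'" and w: "word_over r w" "w \<noteq> []" and z: "Im z > 0"
    and lower: "\<And>t s. \<bar>t - s\<bar> / C - \<epsilon> \<le> hdist (gamma A z w t) (gamma A z w s)"
    and generators: "\<And>x. fst x < r \<Longrightarrow> displacement A z [x] \<le> S - 1"
    and close: "\<And>u. word_over r u \<Longrightarrow> length u \<le> 2 ^ Suc h \<Longrightarrow>
                  \<bar>displacement A' z u - displacement A z u\<bar> < 1"
    and S: "S \<ge> 1" and C: "C \<ge> 1" and \<epsilon>: "\<epsilon> > 0"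
    and h: "2 * S * C\<^sup>2 * hyp_delta * h + C * (\<epsilon> + 5 + 2 * hyp_delta + S * C * (\<epsilon> + 4 * S + 6 * hyp_delta)) \<le> 2 ^ h"
  shows "\<bar>t - s\<bar> / max (2 ^ h) S - (2 + S * 2 ^ h + 2 * S) \<le> hdist (gamma A' z w t) (gamma A' z w s)"
    and "hdist (gamma A' z w t) (gamma A' z w s) \<le> max (2 ^ h) S * \<bar>t - s\<bar> + 3 * S"
proof -
  define x where "x = orbit_pt A z w"
  define y where "y = orbit_pt A' z w"
  have im: "Im (x k) > 0" "Im (y k) > 0" for k
    using Im_orbit_pt[OF A w(1) z] Im_orbit_pt[OF A' w(1) z] by (simp_all add: x_def y_def)
  have dist_seg: "hdist (orbit_pt B z w k) (orbit_pt B z w (k + int j)) = displacement B z (cyclic_segment w k j)"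
    if "sl2_rep r B" for B k j
    using hdist_orbit_pt[OF that w z] .
  have x_step: "hdist (x k) (x (k + 1)) \<le> S - 1" for k
  proof -
    have "hdist (x k) (x (k + 1)) = displacement A z [w ! nat (k mod length w)]"
      using dist_seg[OF A, of k 1] unfolding cyclic_segment_1 by (simp add: x_def)
    then show ?thesis
      using generators nth_mod_length_in_set[OF w(2), of k] w(1) by (simp add: word_over_def)
  qed
  have x_lower: "\<bar>real_of_int (j - k)\<bar> / C - \<epsilon> \<le> hdist (x j) (x k)" for j k
    using lower[of "of_int j" "of_int k"] by (simp add: gamma_of_int[OF A w(1) z] x_def)
  have close_xy: "\<bar>hdist (y j) (y k) - hdist (x j) (x k)\<bar> < 1" if "j \<le> k" "k - j \<le> 2 ^ Suc h" for j k
    using close[OF word_over_cyclic_segment[OF w], of j "nat (k - j)"] dist_seg[OF A, of j "nat (k - j)"]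
      dist_seg[OF A', of j "nat (k - j)"] that
    by (simp add: x_def y_def nat_le_iff)
  note y_bounds = quasi_geodesic_of_locally_close[where x=x and y=y, OF im x_step x_lower close_xy S C \<epsilon> h]
  note y_step = y_bounds(1) and y_lower = y_bounds(2)
  have near: "Im (gamma A' z w t) > 0" "hdist (y \<lfloor>t\<rfloor>) (gamma A' z w t) \<le> S" for t
    using gamma_near_orbit_pt[OF A' w(1) z, of t] y_step[of "\<lfloor>t\<rfloor>"] by (simp_all add: y_def)
  show "\<bar>t - s\<bar> / max (2 ^ h) S - (2 + S * 2 ^ h + 2 * S) \<le> hdist (gamma A' z w t) (gamma A' z w s)"
    and "hdist (gamma A' z w t) (gamma A' z w s) \<le> max (2 ^ h) S * \<bar>t - s\<bar> + 3 * S"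
    using quasi_geodesic_interpolation[where L = "2 ^ h" and B = "1 + S * 2 ^ h", OF im(2) near y_step]
      y_lower by (simp_all add: algebra_simps)
qed

lemma displacement_generators_bounded:
  assumes A: "sl2_rep r A" and z: "Im z > 0"
  obtains S where "S \<ge> 1" "\<And>x. fst x < r \<Longrightarrow> displacement A z [x] \<le> S - 1"
proof
  have nonneg: "displacement A z [x] \<ge> 0" if "x \<in> {..<r} \<times> UNIV" for x
    using that A z by (intro displacement_nonneg) (auto simp: word_over_def mem_Times_iff)
  then show "1 + (\<Sum>x\<in>{..<r} \<times> UNIV. displacement A z [x]) \<ge> 1"
    by (simp add: sum_nonneg)
  show "displacement A z [x] \<le> 1 + (\<Sum>x\<in>{..<r} \<times> UNIV. displacement A z [x]) - 1" if "fst x < r" for x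
    using that nonneg by (simp, intro member_le_sum) (auto simp: mem_Times_iff UNIV_bool)
qed

lemma uniformly_quasi_geodesic_of_close:
  assumes W: "\<And>w. w \<in> W \<Longrightarrow> w \<noteq> [] \<and> word_over r w"
    and A: "sl2_rep r A" and z: "Im z > 0" and qg: "uniformly_quasi_geodesic W A z"
  obtains F where "finite F" "\<And>u. u \<in> F \<Longrightarrow> word_over r u"
    "\<And>A'. sl2_rep r A' \<Longrightarrow> (\<And>u. u \<in> F \<Longrightarrow> \<bar>displacement A' z u - displacement A z u\<bar> < 1)
       \<Longrightarrow> uniformly_quasi_geodesic W A' z"
proof -
  obtain C \<epsilon> where C: "C \<ge> 1" and \<epsilon>: "\<epsilon> > 0"
    and lower: "\<And>w t s. w \<in> W \<Longrightarrow> \<bar>t - s\<bar> / C - \<epsilon> \<le> hdist (gamma A z w t) (gamma A z w s)"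
    using qg unfolding uniformly_quasi_geodesic_def by blast
  obtain S where S: "S \<ge> 1" and generators: "\<And>x. fst x < r \<Longrightarrow> displacement A z [x] \<le> S - 1"
    using displacement_generators_bounded[OF A z] by blast
  obtain h :: nat where h: "2 * S * C\<^sup>2 * hyp_delta * h
      + C * (\<epsilon> + 5 + 2 * hyp_delta + S * C * (\<epsilon> + 4 * S + 6 * hyp_delta)) \<le> 2 ^ h"
    using exists_linear_le_power2 by (metis mult.commute)
  define F where "F = {u :: word. set u \<subseteq> {..<r} \<times> UNIV \<and> length u \<le> 2 ^ Suc h}"
  have "finite F"
    unfolding F_def by (intro finite_lists_length_le finite_cartesian_product) (auto simp: UNIV_bool)
  moreover have F: "u \<in> F \<longleftrightarrow> word_over r u \<and> length u \<le> 2 ^ Suc h" for u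
    by (auto simp: F_def word_over_def)
  moreover have "uniformly_quasi_geodesic W A' z"
    if A': "sl2_rep r A'" and close: "\<And>u. u \<in> F \<Longrightarrow> \<bar>displacement A' z u - displacement A z u\<bar> < 1" for A'
    unfolding uniformly_quasi_geodesic_def
  proof (intro exI conjI ballI allI)
    fix w t s assume w: "w \<in> W"
    have close': "\<bar>displacement A' z u - displacement A z u\<bar> < 1"
      if "word_over r u" "length u \<le> 2 ^ Suc h" for u
      using close F that by blast
    have w': "word_over r w" "w \<noteq> []"
      using W[OF w] by auto
    note bounds = orbit_path_quasi_geodesic_of_close[OF A A' w' z lower[OF w] generators close' S C \<epsilon> h]
    have "0 \<le> S * 2 ^ h"
      using S by simp
    then show "\<bar>t - s\<bar> / max (2 ^ h) S - (2 + S * 2 ^ h + 3 * S) \<le> hdist (gamma A' z w t) (gamma A' z w s)"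
      "hdist (gamma A' z w t) (gamma A' z w s) \<le> max (2 ^ h) S * \<bar>t - s\<bar> + (2 + S * 2 ^ h + 3 * S)"
      using bounds[of t s] S by linarith+
  qed (use S in \<open>auto simp: add_pos_nonneg\<close>)
  ultimately show ?thesis
    using that by blast
qed

section \<open>Continuity in the representation\<close>

text \<open>On unimodular matrices \<open>matrix_inv\<close> agrees with the adjugate, which is continuous.\<close>

definition letter_mat_adj2 :: "(nat \<Rightarrow> m2) \<Rightarrow> letter \<Rightarrow> m2" where
  "letter_mat_adj2 A x = (if snd x then adj2 (A (fst x)) else A (fst x))"

fun eval_adj2 :: "(nat \<Rightarrow> m2) \<Rightarrow> word \<Rightarrow> m2" where
  "eval_adj2 A [] = mat 1"
| "eval_adj2 A (x # u) = letter_mat_adj2 A x ** eval_adj2 A u"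

lemma eval_eq_eval_adj2: "sl2_rep r A \<Longrightarrow> word_over r u \<Longrightarrow> eval A u = eval_adj2 A u"
  by (induction u) (auto simp: word_over_Cons letter_mat_def letter_mat_adj2_def sl2_rep_def matrix_inv_eq_adj2)

definition cosh_displacement :: "complex \<Rightarrow> m2 \<Rightarrow> real" where
  "cosh_displacement z M = 1 + ((M$2$1 * ((Re z)\<^sup>2 - (Im z)\<^sup>2) + (M$2$2 - M$1$1) * Re z - M$1$2)\<^sup>2
                  + (2 * M$2$1 * Re z * Im z + (M$2$2 - M$1$1) * Im z)\<^sup>2) / (2 * (Im z)\<^sup>2)"

lemma hdist_mob_self:
  assumes M: "det M = 1" and z: "Im z > 0"
  shows "hdist z (mob M z) = arcosh (cosh_displacement z M)"
proof -
  define d where "d = mob_denom M z"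
  define n where "n = of_real (M$1$1) * z + of_real (M$1$2)"
  have d: "d \<noteq> 0"
    using mob_denom_nonzero[OF M z] by (simp add: d_def)
  have "mob M z = n / d"
    by (simp add: mob_eq_div_denom n_def d_def)
  then have zw: "z - mob M z = (z * d - n) / d"
    using d by (simp add: field_simps)
  have "Im (mob M z) = Im z / (cmod d)\<^sup>2"
    using Im_mob[OF M] by (simp add: d_def)
  then have "(cmod (z - mob M z))\<^sup>2 / (2 * Im z * Im (mob M z)) = (cmod (z * d - n))\<^sup>2 / (2 * (Im z)\<^sup>2)"
    using d z by (simp add: zw norm_divide power_divide field_simps power2_eq_square)
  moreover have "Re (z * d - n) = M$2$1 * ((Re z)\<^sup>2 - (Im z)\<^sup>2) + (M$2$2 - M$1$1) * Re z - M$1$2"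
    "Im (z * d - n) = 2 * M$2$1 * Re z * Im z + (M$2$2 - M$1$1) * Im z"
    by (simp_all add: d_def n_def mob_denom_def power2_eq_square algebra_simps)
  ultimately show ?thesis
    by (simp add: hdist_def cosh_displacement_def cmod_power2)
qed

lemma sl2_rep_of_topspace: "A \<in> topspace (rep_top r) \<Longrightarrow> sl2_rep r A"
  by (simp add: rep_top_def sl2_rep_def)

lemma continuous_map_rep_entry:
  assumes "i < r"
  shows "continuous_map (rep_top r) euclideanreal (\<lambda>A. A i $ a $ b)"
proof -
  have "continuous_map (rep_top r) euclidean (\<lambda>A. A i)"
    unfolding rep_top_def using assms
    by (intro continuous_map_from_subtopology continuous_map_product_projection) simp
  moreover have "continuous_map euclidean euclideanreal (\<lambda>M::m2. M $ a $ b)"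
    by (simp add: continuous_on_component continuous_on_id)
  ultimately show ?thesis
    using continuous_map_compose[of "rep_top r" euclidean "\<lambda>A. A i" euclideanreal "\<lambda>M. M $ a $ b"]
    by (simp add: o_def)
qed

lemma continuous_map_eval_adj2:
  assumes "word_over r u"
  shows "continuous_map (rep_top r) euclideanreal (\<lambda>A. eval_adj2 A u $ a $ b)"
  using assms
proof (induction u arbitrary: a b)
  case (Cons x u)
  have x: "fst x < r" and u: "word_over r u"
    using Cons.prems by (simp_all add: word_over_Cons)
  have "continuous_map (rep_top r) euclideanreal (\<lambda>A. letter_mat_adj2 A x $ a' $ b')" for a' b'
    using continuous_map_rep_entry[OF x] exhaust_2[of a'] exhaust_2[of b']
    by (cases "snd x") (auto intro!: continuous_map_minus simp: letter_mat_adj2_def)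
  then show ?case
    by (simp, intro continuous_map_add continuous_map_real_mult Cons.IH[OF u])
qed (simp add: mat_def)

lemma continuous_map_displacement:
  assumes "word_over r u" "Im z > 0"
  shows "continuous_map (rep_top r) euclideanreal (\<lambda>A. displacement A z u)"
proof (rule continuous_map_eq)
  have "continuous_map (rep_top r) euclideanreal (\<lambda>A. cosh_displacement z (eval_adj2 A u))"
    unfolding cosh_displacement_def
    using assms(2)
    by (intro continuous_map_add continuous_map_diff continuous_map_real_mult continuous_map_real_pow
        continuous_map_real_divide continuous_map_canonical_const continuous_map_eval_adj2[OF assms(1)]) auto
  then have "continuous_map (rep_top r) (subtopology euclideanreal {1..}) (\<lambda>A. cosh_displacement z (eval_adj2 A u))"
    by (simp add: continuous_map_into_subtopology cosh_displacement_def)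
  moreover have "continuous_map (subtopology euclideanreal {1..}) euclideanreal arcosh"
    by (simp add: continuous_on_arcosh)
  ultimately show "continuous_map (rep_top r) euclideanreal (\<lambda>A. arcosh (cosh_displacement z (eval_adj2 A u)))"
    using continuous_map_compose[of "rep_top r" _ "\<lambda>A. cosh_displacement z (eval_adj2 A u)" euclideanreal arcosh]
    by (simp add: o_def)
next
  fix A assume "A \<in> topspace (rep_top r)"
  then have "sl2_rep r A"
    by (rule sl2_rep_of_topspace)
  then show "arcosh (cosh_displacement z (eval_adj2 A u)) = displacement A z u"
    using assms hdist_mob_self det_eval
    by (simp add: displacement_def eval_eq_eval_adj2)
qed

lemma uniformly_quasi_geodesic_nhd:
  assumes W: "\<And>w. w \<in> W \<Longrightarrow> w \<noteq> [] \<and> word_over r w"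
    and A: "A \<in> topspace (rep_top r)" and z: "Im z > 0" and qg: "uniformly_quasi_geodesic W A z"
  obtains U where "openin (rep_top r) U" "A \<in> U" "\<And>B. B \<in> U \<Longrightarrow> uniformly_quasi_geodesic W B z"
proof -
  obtain F where F: "finite F" "\<And>u. u \<in> F \<Longrightarrow> word_over r u"
    and stable: "\<And>B. sl2_rep r B \<Longrightarrow> (\<And>u. u \<in> F \<Longrightarrow> \<bar>displacement B z u - displacement A z u\<bar> < 1)
       \<Longrightarrow> uniformly_quasi_geodesic W B z"
    using uniformly_quasi_geodesic_of_close[OF W sl2_rep_of_topspace[OF A] z qg] by blast
  define U where "U = (\<Inter>u\<in>F. {B \<in> topspace (rep_top r). displacement B z u \<in> ball (displacement A z u) 1})
                      \<inter> topspace (rep_top r)"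
  have "openin (rep_top r) U"
    unfolding U_def
  proof (rule openin_INT[OF F(1)])
    fix u assume "u \<in> F"
    then show "openin (rep_top r) {B \<in> topspace (rep_top r). displacement B z u \<in> ball (displacement A z u) 1}"
      using F z by (intro openin_continuous_map_preimage[OF continuous_map_displacement]) auto
  qed
  moreover have "A \<in> U"
    using A by (simp add: U_def)
  moreover have "uniformly_quasi_geodesic W B z" if "B \<in> U" for B
    using that sl2_rep_of_topspace by (intro stable) (auto simp: U_def dist_real_def abs_minus_commute)
  ultimately show ?thesis
    using that by blast
qed

definition nonsep_words :: "nat \<Rightarrow> nat \<Rightarrow> word set" where
  "nonsep_words g n = {w. cyc_reduced w \<and> nonsep_scc g n w}"

lemma nonsep_words_word_over: "w \<in> nonsep_words g n \<Longrightarrow> w \<noteq> [] \<and> word_over (rk g n) w"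
  by (simp add: nonsep_words_def cyc_reduced_def nonsep_scc_def)

lemma simple_stable_iff:
  "simple_stable g n A \<longleftrightarrow> (\<exists>z. Im z > 0 \<and> uniformly_quasi_geodesic (nonsep_words g n) A z)"
  unfolding simple_stable_def uniformly_quasi_geodesic_def nonsep_words_def by simp

lemma simple_stable_nhd:
  assumes "A \<in> topspace (rep_top (rk g n))" "simple_stable g n A"
  obtains U where "openin (rep_top (rk g n)) U" "A \<in> U" "\<And>B. B \<in> U \<Longrightarrow> simple_stable g n B"
proof -
  obtain z where z: "Im z > 0" and qg: "uniformly_quasi_geodesic (nonsep_words g n) A z"
    using assms(2) unfolding simple_stable_iff by blast
  obtain U where U: "openin (rep_top (rk g n)) U" "A \<in> U"
    and qgU: "\<And>B. B \<in> U \<Longrightarrow> uniformly_quasi_geodesic (nonsep_words g n) B z"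
    using uniformly_quasi_geodesic_nhd[OF nonsep_words_word_over assms(1) z qg] by blast
  have "simple_stable g n B" if "B \<in> U" for B
    unfolding simple_stable_iff using z qgU[OF that] by blast
  with U show ?thesis
    using that by blast
qed

section \<open>Conjugation and the quotient topology\<close>

definition sign_conj :: "nat \<Rightarrow> m2 \<Rightarrow> (nat \<Rightarrow> real) \<Rightarrow> (nat \<Rightarrow> m2) \<Rightarrow> (nat \<Rightarrow> m2) \<Rightarrow> bool" where
  "sign_conj r G \<epsilon> A B \<longleftrightarrow> det G = 1 \<and> (\<forall>i<r. (\<epsilon> i = 1 \<or> \<epsilon> i = -1) \<and> B i = \<epsilon> i *\<^sub>R (G ** A i ** adj2 G))"

lemma conj_rel_iff: "(A, B) \<in> conj_rel r \<longleftrightarrow> A \<in> NE r \<and> B \<in> NE r \<and> (\<exists>G \<epsilon>. sign_conj r G \<epsilon> A B)"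
  unfolding conj_rel_def sign_conj_def by (simp add: matrix_inv_eq_adj2 cong: conj_cong)

lemma sign_conj_refl: "sign_conj r (mat 1) (\<lambda>_. 1) A A"
  by (simp add: sign_conj_def)

lemma sign_conj_sym:
  assumes "sign_conj r G \<epsilon> A B"
  shows "sign_conj r (adj2 G) \<epsilon> B A"
proof -
  have G: "det G = 1"
    using assms by (simp add: sign_conj_def)
  have "A i = \<epsilon> i *\<^sub>R (adj2 G ** B i ** G)" if "i < r" for i
  proof -
    have "\<epsilon> i * \<epsilon> i = 1" "B i = \<epsilon> i *\<^sub>R (G ** A i ** adj2 G)"
      using assms that by (auto simp: sign_conj_def)
    then show ?thesis
      using G by (simp add: matrix_scalar_ac matrix_mul_assoc mult_adj2_cancel mult_adj2_left
                           flip: scalar_matrix_assoc)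
  qed
  then show ?thesis
    using assms G by (simp add: sign_conj_def)
qed

lemma sign_conj_trans:
  assumes "sign_conj r G \<epsilon> A B" "sign_conj r H \<delta> B C"
  shows "sign_conj r (H ** G) (\<lambda>i. \<delta> i * \<epsilon> i) A C"
proof -
  have "C i = (\<delta> i * \<epsilon> i) *\<^sub>R (H ** G ** A i ** adj2 (H ** G))" if "i < r" for i
    using assms that
    by (simp add: sign_conj_def adj2_mult matrix_scalar_ac matrix_mul_assoc flip: scalar_matrix_assoc)
  moreover have "\<delta> i * \<epsilon> i = 1 \<or> \<delta> i * \<epsilon> i = -1" if "i < r" for i
  proof -
    have "\<epsilon> i = 1 \<or> \<epsilon> i = -1" "\<delta> i = 1 \<or> \<delta> i = -1"
      using assms that by (simp_all add: sign_conj_def)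
    then show ?thesis
      by auto
  qed
  ultimately show ?thesis
    using assms by (simp add: sign_conj_def det_mul)
qed

lemma equiv_conj_rel: "equiv (NE r) (conj_rel r)"
proof (rule equivI)
  show "conj_rel r \<subseteq> NE r \<times> NE r"
    by (auto simp: conj_rel_def)
  show "refl_on (NE r) (conj_rel r)"
  proof (rule refl_onI)
    fix A assume "A \<in> NE r"
    then show "(A, A) \<in> conj_rel r"
      unfolding conj_rel_iff using sign_conj_refl by blast
  qed
  show "sym (conj_rel r)"
  proof (rule symI)
    fix A B assume "(A, B) \<in> conj_rel r"
    then show "(B, A) \<in> conj_rel r"
      unfolding conj_rel_iff using sign_conj_sym by blast
  qed
  show "trans (conj_rel r)"
  proof (rule transI)
    fix A B C assume "(A, B) \<in> conj_rel r" "(B, C) \<in> conj_rel r"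
    then show "(A, C) \<in> conj_rel r"
      unfolding conj_rel_iff using sign_conj_trans by blast
  qed
qed

lemma sl2_rep_of_NE: "A \<in> NE r \<Longrightarrow> sl2_rep r A"
  by (simp add: NE_def sl2_rep_of_topspace)

lemma eval_sign_conj:
  assumes A: "sl2_rep r A" and AB: "sign_conj r G \<epsilon> A B" and u: "word_over r u"
  shows "\<exists>\<sigma>. (\<sigma> = 1 \<or> \<sigma> = -1) \<and> eval B u = \<sigma> *\<^sub>R (G ** eval A u ** adj2 G)"
  using u
proof (induction u)
  case Nil
  then show ?case
    using AB by (intro exI[of _ 1]) (simp add: sign_conj_def mult_adj2_right)
next
  case (Cons x u)
  obtain \<sigma> where \<sigma>: "\<sigma> = 1 \<or> \<sigma> = -1" and u: "eval B u = \<sigma> *\<^sub>R (G ** eval A u ** adj2 G)"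
    using Cons by (auto simp: word_over_Cons)
  have G: "det G = 1" and x: "fst x < r"
    using AB Cons.prems by (simp_all add: sign_conj_def word_over_Cons)
  have \<epsilon>: "\<epsilon> (fst x) = 1 \<or> \<epsilon> (fst x) = -1" and Bx: "B (fst x) = \<epsilon> (fst x) *\<^sub>R (G ** A (fst x) ** adj2 G)"
    using AB x by (auto simp: sign_conj_def)
  have dA: "det (A (fst x)) = 1"
    using A x by (simp add: sl2_rep_def)
  then have "det (B (fst x)) = 1"
    using \<epsilon> G by (auto simp: Bx det_scaleR_m2 det_mul)
  then have "letter_mat B x = \<epsilon> (fst x) *\<^sub>R (G ** letter_mat A x ** adj2 G)"
    using dA by (simp add: letter_mat_def matrix_inv_eq_adj2 Bx adj2_scaleR adj2_mult matrix_mul_assoc)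
  then have "eval B (x # u) = (\<epsilon> (fst x) * \<sigma>) *\<^sub>R (G ** letter_mat A x ** (adj2 G ** G) ** eval A u ** adj2 G)"
    by (simp add: u matrix_scalar_ac matrix_mul_assoc flip: scalar_matrix_assoc)
  then have "eval B (x # u) = (\<epsilon> (fst x) * \<sigma>) *\<^sub>R (G ** eval A (x # u) ** adj2 G)"
    by (simp add: mult_adj2_left[OF G] matrix_mul_assoc)
  then show ?case
    using \<sigma> \<epsilon> by (intro exI[of _ "\<epsilon> (fst x) * \<sigma>"]) auto
qed

lemma orbit_pt_sign_conj:
  assumes A: "sl2_rep r A" and AB: "sign_conj r G \<epsilon> A B" and w: "word_over r w" and z: "Im z > 0"
  shows "orbit_pt B (mob G z) w k = mob G (orbit_pt A z w k)"
proof -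
  let ?E = "eval A (vert w k)"
  have G: "det G = 1" and E: "det ?E = 1"
    using AB det_eval[OF A word_over_vert[OF w]] by (simp_all add: sign_conj_def)
  obtain \<sigma> where "\<sigma> = 1 \<or> \<sigma> = -1" and "eval B (vert w k) = \<sigma> *\<^sub>R (G ** ?E ** adj2 G)"
    using eval_sign_conj[OF A AB word_over_vert[OF w]] by blast
  then have "orbit_pt B (mob G z) w k = mob (G ** ?E ** adj2 G) (mob G z)"
    unfolding orbit_pt_def by (metis mob_scaleR zero_neq_neg_one zero_neq_one)
  also have "\<dots> = mob (G ** ?E) (mob (adj2 G) (mob G z))"
    using G Im_mob_pos[OF G z] by (intro mob_mult) simp_all
  also have "\<dots> = mob G (mob ?E z)"
    using mob_adj2_mob[OF G z] mob_mult[OF E z] by simp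
  finally show ?thesis
    by (simp add: orbit_pt_def)
qed

lemma uniformly_quasi_geodesic_sign_conj:
  assumes W: "\<And>w. w \<in> W \<Longrightarrow> word_over r w"
    and A: "sl2_rep r A" and AB: "sign_conj r G \<epsilon> A B" and z: "Im z > 0"
    and qg: "uniformly_quasi_geodesic W A z"
  shows "uniformly_quasi_geodesic W B (mob G z)"
proof -
  have G: "det G = 1"
    using AB by (simp add: sign_conj_def)
  have "gamma B (mob G z) w t = mob G (gamma A z w t)" if "w \<in> W" for w t
  proof -
    have "0 \<le> t - of_int \<lfloor>t\<rfloor>" "t - of_int \<lfloor>t\<rfloor> \<le> 1"
      by linarith+
    then show ?thesis
      unfolding gamma_eq_geod_pt orbit_pt_sign_conj[OF A AB W[OF that] z]
      using Im_orbit_pt[OF A W[OF that] z] by (intro geod_pt_mob[OF G])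
  qed
  moreover have "Im (gamma A z w t) > 0" if "w \<in> W" for w t
    using gamma_near_orbit_pt(1)[OF A W[OF that] z] .
  ultimately show ?thesis
    using qg by (simp add: uniformly_quasi_geodesic_def hdist_mob[OF G])
qed

lemma simple_stable_conj_rel:
  assumes AB: "(A, B) \<in> conj_rel (rk g n)" and A: "simple_stable g n A"
  shows "simple_stable g n B"
proof -
  obtain G \<epsilon> where "A \<in> NE (rk g n)" and AB: "sign_conj (rk g n) G \<epsilon> A B"
    using AB by (auto simp: conj_rel_iff)
  then have A_sl2: "sl2_rep (rk g n) A" and G: "det G = 1"
    by (simp_all add: sl2_rep_of_NE sign_conj_def)
  obtain z where z: "Im z > 0" and qg: "uniformly_quasi_geodesic (nonsep_words g n) A z"
    using A unfolding simple_stable_iff by blast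
  have "uniformly_quasi_geodesic (nonsep_words g n) B (mob G z)"
    using nonsep_words_word_over by (intro uniformly_quasi_geodesic_sign_conj[OF _ A_sl2 AB z qg]) blast
  then show ?thesis
    unfolding simple_stable_iff using Im_mob_pos[OF G z] by blast
qed

lemma istopology_quotient:
  assumes "\<And>X Y. X \<in> Q \<Longrightarrow> Y \<in> Q \<Longrightarrow> X = Y \<or> X \<inter> Y = {}"
  shows "istopology (\<lambda>U. U \<subseteq> Q \<and> openin T (\<Union>U))"
  unfolding istopology_def
proof (rule conjI; intro allI impI)
  fix S S' assume S: "S \<subseteq> Q \<and> openin T (\<Union>S)" and S': "S' \<subseteq> Q \<and> openin T (\<Union>S')"
  have "\<Union>(S \<inter> S') = \<Union>S \<inter> \<Union>S'"
    using S S' assms by blast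
  then show "S \<inter> S' \<subseteq> Q \<and> openin T (\<Union>(S \<inter> S'))"
    using S S' by auto
next
  fix K assume K: "\<forall>U\<in>K. U \<subseteq> Q \<and> openin T (\<Union>U)"
  have "\<Union>(\<Union>K) = \<Union>((\<lambda>U. \<Union>U) ` K)"
    by blast
  then show "\<Union>K \<subseteq> Q \<and> openin T (\<Union>(\<Union>K))"
    using K by auto
qed

lemma openin_Xtop:
  "openin (Xtop g n) U \<longleftrightarrow> U \<subseteq> Xspace g n \<and> openin (subtopology (rep_top (rk g n)) (NE (rk g n))) (\<Union>U)"
proof -
  have "istopology (\<lambda>U. U \<subseteq> Xspace g n \<and> openin (subtopology (rep_top (rk g n)) (NE (rk g n))) (\<Union>U))"
    using quotient_disj[OF equiv_conj_rel] by (intro istopology_quotient) (auto simp: Xspace_def)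
  then show ?thesis
    by (simp add: Xtop_def)
qed

lemma Union_SS: "\<Union>(SS g n) = {A \<in> NE (rk g n). simple_stable g n A}"
proof
  show "\<Union>(SS g n) \<subseteq> {A \<in> NE (rk g n). simple_stable g n A}"
  proof
    fix B assume "B \<in> \<Union>(SS g n)"
    then obtain A where "(A, B) \<in> conj_rel (rk g n)" "simple_stable g n A"
      by (auto simp: SS_def)
    then show "B \<in> {A \<in> NE (rk g n). simple_stable g n A}"
      using simple_stable_conj_rel by (simp add: conj_rel_def)
  qed
  show "{A \<in> NE (rk g n). simple_stable g n A} \<subseteq> \<Union>(SS g n)"
    using equiv_class_self[OF equiv_conj_rel] by (auto simp: SS_def)
qed

lemma openin_simple_stable:
  "openin (subtopology (rep_top (rk g n)) (NE (rk g n))) {A \<in> NE (rk g n). simple_stable g n A}"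
proof (rule openin_subopen[THEN iffD2], intro ballI)
  fix A assume A: "A \<in> {A \<in> NE (rk g n). simple_stable g n A}"
  then obtain U where U: "openin (rep_top (rk g n)) U" "A \<in> U" "\<And>B. B \<in> U \<Longrightarrow> simple_stable g n B"
    using simple_stable_nhd[of A g n] by (auto simp: NE_def)
  then have "openin (subtopology (rep_top (rk g n)) (NE (rk g n))) (NE (rk g n) \<inter> U)"
    by (simp add: openin_subtopology_Int2)
  then show "\<exists>T. openin (subtopology (rep_top (rk g n)) (NE (rk g n))) T \<and> A \<in> T
               \<and> T \<subseteq> {A \<in> NE (rk g n). simple_stable g n A}"
    using A U by blast
qed

theorem theorem4p6:
  fixes g n :: nat
  assumes "g \<ge> 1" and "n \<ge> 1"
  shows "openin (Xtop g n) (SS g n)"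
proof -
  have "SS g n \<subseteq> Xspace g n"
    by (auto simp: SS_def Xspace_def intro: quotientI)
  then show ?thesis
    using openin_simple_stable by (simp add: openin_Xtop Union_SS)
qed

end
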